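(* Assume (SH). Let $x\in\operatorname{dom}f$ and let $0<\rho_t\le1$, $t\in T$, satisfy $\inf_{t\in T}\rho_tf_t(x)>-\infty$. Then \[ \partial f(x)\subset\bigcap_{\varepsilon>0}\overline{\operatorname{co}}\Big(\Big(\bigcup_{t\in T(x)}\partial_\varepsilon f_t(x)\Big)\cup\Big(\bigcup_{t\in T\setminus T(x)}\varepsilon\,\partial_\varepsilon(\rho_tf_t)(x)\Big)\Big). \] Moreover, if $f$ attains its minimum at $x$, this inclusion is an equality.
   Context: $X$ is a real separated locally convex space with dual $X^*$ carrying the weak$^*$ topology. $T$ is a nonempty index set, $\{f_t: t\in T\}$ are proper convex lsc functions $X\to\mathbb{R}\cup\{+\infty\}$, $f:=\sup_{t\in T}f_t$. $T(x):=\{t\in T: f_t(x)=f(x)\}$ (active indices). $\partial_\varepsilon g(x)=\{x^*:\ g(y)\ge g(x)+\langle x^*,y-x\rangle-\varepsilon\ \forall y\}$ if $g(x)\in\mathbb{R}$, $\varepsilon\ge0$ (empty otherwise), $\partial=\partial_0$; $\varepsilon A=\{\varepsilon a:a\in A\}$. $\overline{\operatorname{co}}$ is the weak$^*$-closed convex hull. (SH): $T$ is compact Hausdorff and $t\mapsto f_t(z)$ is upper semicontinuous on $T$ for each $z\in X$. *)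

theory Defs
  imports "HOL-Analysis.Analysis"
begin

text \<open>A real separated locally convex space is modelled as a real vector space of
type 'a whose topology is generated by a family P of seminorms.\<close>

definition seminorm :: "('a::real_vector \<Rightarrow> real) \<Rightarrow> bool" where
  "seminorm p \<longleftrightarrow> (\<forall>x y. p (x + y) \<le> p x + p y) \<and> (\<forall>c x. p (c *\<^sub>R x) = \<bar>c\<bar> * p x)"

definition lcs :: "('a::real_vector \<Rightarrow> real) set \<Rightarrow> bool" where
  "lcs P \<longleftrightarrow> (\<forall>p\<in>P. seminorm p) \<and> (\<forall>x. x \<noteq> 0 \<longrightarrow> (\<exists>p\<in>P. p x > 0))"

definition lc_nbhd :: "('a::real_vector \<Rightarrow> real) set \<Rightarrow> real \<Rightarrow> 'a \<Rightarrow> 'a set" where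
  "lc_nbhd F e x = {y. \<forall>p\<in>F. p (y - x) < e}"

definition lc_open :: "('a::real_vector \<Rightarrow> real) set \<Rightarrow> 'a set \<Rightarrow> bool" where
  "lc_open P U \<longleftrightarrow> (\<forall>x\<in>U. \<exists>F e. finite F \<and> F \<subseteq> P \<and> e > 0 \<and> lc_nbhd F e x \<subseteq> U)"

definition lc_lsc :: "('a::real_vector \<Rightarrow> real) set \<Rightarrow> ('a \<Rightarrow> ereal) \<Rightarrow> bool" where
  "lc_lsc P g \<longleftrightarrow> (\<forall>c::ereal. lc_open P {y. c < g y})"

definition lc_dual :: "('a::real_vector \<Rightarrow> real) set \<Rightarrow> ('a \<Rightarrow> real) set" where
  "lc_dual P = {\<phi>. linear \<phi> \<and> lc_open P {y. \<bar>\<phi> y\<bar> < 1}}"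

definition proper_fun :: "('a \<Rightarrow> ereal) \<Rightarrow> bool" where
  "proper_fun g \<longleftrightarrow> (\<forall>x. g x \<noteq> -\<infinity>) \<and> (\<exists>x. g x \<noteq> \<infinity>)"

definition convex_fun :: "('a::real_vector \<Rightarrow> ereal) \<Rightarrow> bool" where
  "convex_fun g \<longleftrightarrow> (\<forall>x y u. 0 \<le> u \<and> u \<le> 1 \<longrightarrow>
      g (u *\<^sub>R x + (1 - u) *\<^sub>R y) \<le> ereal u * g x + ereal (1 - u) * g y)"

definition eps_subdiff :: "('a::real_vector \<Rightarrow> real) set \<Rightarrow> real \<Rightarrow> ('a \<Rightarrow> ereal) \<Rightarrow> 'a \<Rightarrow> ('a \<Rightarrow> real) set" where
  "eps_subdiff P e g x = (if \<bar>g x\<bar> \<noteq> \<infinity> then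
      {\<phi> \<in> lc_dual P. \<forall>y. g x + ereal (\<phi> (y - x)) - ereal e \<le> g y} else {})"

definition wstar_closed :: "('a::real_vector \<Rightarrow> real) set \<Rightarrow> ('a \<Rightarrow> real) set \<Rightarrow> bool" where
  "wstar_closed P C \<longleftrightarrow> C \<subseteq> lc_dual P \<and>
     (\<forall>\<phi>\<in>lc_dual P. (\<forall>(F::'a set) e. finite F \<and> e > 0 \<longrightarrow> (\<exists>\<psi>\<in>C. \<forall>z\<in>F. \<bar>\<phi> z - \<psi> z\<bar> < e)) \<longrightarrow> \<phi> \<in> C)"

definition fconvex :: "('a \<Rightarrow> real) set \<Rightarrow> bool" where
  "fconvex C \<longleftrightarrow> (\<forall>\<phi>\<in>C. \<forall>\<psi>\<in>C. \<forall>u::real. 0 \<le> u \<and> u \<le> 1 \<longrightarrow> (\<lambda>z. u * \<phi> z + (1 - u) * \<psi> z) \<in> C)"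

definition wstar_clco :: "('a::real_vector \<Rightarrow> real) set \<Rightarrow> ('a \<Rightarrow> real) set \<Rightarrow> ('a \<Rightarrow> real) set" where
  "wstar_clco P A = \<Inter>{C. fconvex C \<and> wstar_closed P C \<and> A \<subseteq> C}"

definition fscale :: "real \<Rightarrow> ('a \<Rightarrow> real) set \<Rightarrow> ('a \<Rightarrow> real) set" where
  "fscale e A = (\<lambda>\<phi>. (\<lambda>z. e * \<phi> z)) ` A"

end

theory Submission
  imports Defs "HOL-Library.Function_Algebras"
begin

text \<open>Suppose \<open>x\<^sup>*\<close> is a subgradient of \<open>f\<close> at \<open>x\<close> lying outside the weak* closed convex hull
  for some \<open>\<epsilon>\<close>. Weak* separation gives a direction \<open>w\<close> along which every element of the hull
  has slope at least \<open>\<theta>\<close> below \<open>x\<^sup>*(w)\<close>. Each \<open>f\<^sub>t\<close> must then drop below the line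
  \<open>f(x) + (x\<^sup>*(w) - \<theta>/2) s\<close> at some point \<open>x + s w\<close>: otherwise, separating its epigraph swept
  along that ray from a point below \<open>(x, f\<^sub>t(x))\<close> produces an \<open>\<epsilon>\<close>-subgradient of \<open>f\<^sub>t\<close> (active
  \<open>t\<close>) or of \<open>\<rho>\<^sub>t f\<^sub>t\<close> (inactive \<open>t\<close> with \<open>f\<^sub>t = \<infinity>\<close> on the ray) whose slope along \<open>w\<close> is too
  large; for the remaining inactive \<open>t\<close> convexity and \<open>f\<^sub>t(x) < f(x)\<close> suffice. Upper
  semicontinuity in \<open>t\<close> and compactness of \<open>T\<close> give a single step for all \<open>t\<close>, contradicting
  the subgradient inequality of \<open>x\<^sup>*\<close>. At a minimiser, every element of the hull satisfies
  \<open>x\<^sup>*(y - x) \<le> f(y) - f(x) + O(\<epsilon>)\<close>, since such bounds cut out weak* closed half-spaces;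
  letting \<open>\<epsilon> \<rightarrow> 0\<close> gives the converse inclusion.\<close>

section \<open>Algebraic Hahn--Banach theorem\<close>

definition sublinear :: "('a::real_vector \<Rightarrow> real) \<Rightarrow> bool" where
  "sublinear p \<longleftrightarrow> (\<forall>x y. p (x + y) \<le> p x + p y) \<and> (\<forall>c x. 0 \<le> c \<longrightarrow> p (c *\<^sub>R x) = c * p x)"

text \<open>A linear functional on a subspace of \<open>X\<close>, normalised by the value \<open>1\<close> at \<open>z\<close> and
  dominated by \<open>p\<close>, is represented by its graph, a subspace of \<open>X \<times> \<real>\<close>.\<close>

definition dominated_graph :: "('a::real_vector \<Rightarrow> real) \<Rightarrow> 'a \<Rightarrow> ('a \<times> real) set \<Rightarrow> bool" where
  "dominated_graph p z G \<longleftrightarrow>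
     subspace G \<and> (\<forall>a. (0, a) \<in> G \<longrightarrow> a = 0) \<and> (z, 1) \<in> G \<and> (\<forall>(u, a)\<in>G. a \<le> p u)"

lemma dominated_graph_functional:
  assumes G: "dominated_graph p z G" and "(u, a) \<in> G" "(u, b) \<in> G"
  shows "a = b"
proof -
  have "(u, a) - (u, b) \<in> G"
    using G assms(2,3) unfolding dominated_graph_def by (blast intro: subspace_diff)
  then show ?thesis using G unfolding dominated_graph_def by auto
qed

lemma sublinear_extension_constant:
  assumes p: "sublinear p" and M: "dominated_graph p z M"
  obtains c where "\<And>u a. (u, a) \<in> M \<Longrightarrow> a + c \<le> p (u + y)"
    and "\<And>u a. (u, a) \<in> M \<Longrightarrow> a - c \<le> p (u - y)"
proof -
  define S where "S = {b - p (v - y) | v b. (v, b) \<in> M}"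
  have upper: "s \<le> p (u + y) - a" if "(u, a) \<in> M" "s \<in> S" for u a s
  proof -
    obtain v b where vb: "(v, b) \<in> M" "s = b - p (v - y)" using \<open>s \<in> S\<close> S_def by blast
    have "(u, a) + (v, b) \<in> M" using M that(1) vb(1) unfolding dominated_graph_def
      by (blast intro: subspace_add)
    then have "a + b \<le> p (u + v)" using M unfolding dominated_graph_def by auto
    also have "\<dots> \<le> p (u + y) + p (v - y)" using p unfolding sublinear_def
      by (metis add.commute diff_add_cancel add.assoc)
    finally show ?thesis using vb by simp
  qed
  have "(0, 0) \<in> M" using M unfolding dominated_graph_def by (metis subspace_0 zero_prod_def)
  then have "S \<noteq> {}" and "bdd_above S"
    using upper unfolding bdd_above_def S_def by blast+
  show thesis
  proof
    show "a + Sup S \<le> p (u + y)" if "(u, a) \<in> M" for u a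
      using cSup_least[OF \<open>S \<noteq> {}\<close> upper[OF that]] by simp
    show "a - Sup S \<le> p (u - y)" if "(u, a) \<in> M" for u a
    proof -
      have "a - p (u - y) \<in> S" using that S_def by blast
      then show ?thesis using cSup_upper[OF _ \<open>bdd_above S\<close>] by fastforce
    qed
  qed
qed

lemma dominated_extension_le:
  assumes p: "sublinear p" and M: "subspace M" and ua: "(u, a) \<in> M"
    and dom: "\<And>u a. (u, a) \<in> M \<Longrightarrow> a \<le> p u"
    and plus: "\<And>u a. (u, a) \<in> M \<Longrightarrow> a + c \<le> p (u + y)"
    and minus: "\<And>u a. (u, a) \<in> M \<Longrightarrow> a - c \<le> p (u - y)"
  shows "a + k * c \<le> p (u + k *\<^sub>R y)"
proof -
  have phom: "p (r *\<^sub>R v) = r * p v" if "0 \<le> r" for r v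
    using p that unfolding sublinear_def by blast
  show ?thesis
  proof (cases k "0::real" rule: linorder_cases)
    case less
    have "((- 1 / k) *\<^sub>R u, (- 1 / k) * a) \<in> M"
      using subspace_scale[OF M ua, of "- 1 / k"] by simp
    from minus[OF this] have "(- k) * ((- 1 / k) * a - c) \<le> (- k) * p ((- 1 / k) *\<^sub>R u - y)"
      using less by (intro mult_left_mono) auto
    also have "\<dots> = p ((- k) *\<^sub>R ((- 1 / k) *\<^sub>R u - y))" using phom[of "- k"] less by simp
    also have "(- k) *\<^sub>R ((- 1 / k) *\<^sub>R u - y) = u + k *\<^sub>R y"
      using less by (simp add: scaleR_diff_right)
    finally show ?thesis using less by (simp add: algebra_simps)
  next
    case equal
    then show ?thesis using dom[OF ua] by simp
  next
    case greater
    have "((1 / k) *\<^sub>R u, (1 / k) * a) \<in> M"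
      using subspace_scale[OF M ua, of "1 / k"] by simp
    from plus[OF this] have "k * ((1 / k) * a + c) \<le> k * p ((1 / k) *\<^sub>R u + y)"
      using greater by (intro mult_left_mono) auto
    also have "\<dots> = p (k *\<^sub>R ((1 / k) *\<^sub>R u + y))" using phom[of k] greater by simp
    also have "k *\<^sub>R ((1 / k) *\<^sub>R u + y) = u + k *\<^sub>R y"
      using greater by (simp add: scaleR_add_right)
    finally show ?thesis using greater by (simp add: algebra_simps)
  qed
qed

lemma span_insert_subspaceE:
  assumes "subspace M" and "w \<in> span (insert v M)"
  obtains k where "w - k *\<^sub>R v \<in> M"
proof -
  have "span M = M" using assms(1) by (simp add: span_eq_iff)
  then show thesis using that assms(2) span_insert[of v M] by blast
qed

lemma dominated_graph_extend:
  assumes p: "sublinear p" and M: "dominated_graph p z M" and y: "y \<notin> fst ` M"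
  shows "\<exists>G. dominated_graph p z G \<and> M \<subset> G"
proof -
  have subM: "subspace M" using M unfolding dominated_graph_def by blast
  obtain c where plus: "\<And>u a. (u, a) \<in> M \<Longrightarrow> a + c \<le> p (u + y)"
    and minus: "\<And>u a. (u, a) \<in> M \<Longrightarrow> a - c \<le> p (u - y)"
    using sublinear_extension_constant[OF p M] by blast
  define G where "G = span (insert (y, c) M)"
  have G_cases: "\<exists>k. (u - k *\<^sub>R y, a - k * c) \<in> M" if "(u, a) \<in> G" for u a
    using span_insert_subspaceE[OF subM that[unfolded G_def]] by auto
  have "dominated_graph p z G"
    unfolding dominated_graph_def
  proof (intro conjI allI impI ballI)
    show "subspace G" unfolding G_def by simp
    show "(z, 1) \<in> G" using M unfolding G_def dominated_graph_def by (simp add: span_base)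
  next
    fix a assume "(0, a) \<in> G"
    then obtain k where k: "(- k *\<^sub>R y, a - k * c) \<in> M" using G_cases by fastforce
    show "a = 0"
    proof (cases "k = 0")
      case True then show ?thesis using k M unfolding dominated_graph_def by auto
    next
      case False
      have "(- 1 / k) *\<^sub>R (- k *\<^sub>R y, a - k * c) \<in> M" using subspace_scale[OF subM k] .
      moreover have "fst ((- 1 / k) *\<^sub>R (- k *\<^sub>R y, a - k * c)) = y" using False by simp
      ultimately have "y \<in> fst ` M" by (metis image_eqI)
      then show ?thesis using y by blast
    qed
  next
    fix w assume "w \<in> G"
    then obtain u a k where "w = (u, a)" "(u - k *\<^sub>R y, a - k * c) \<in> M"
      using G_cases by (metis prod.collapse)
    then show "case w of (u, a) \<Rightarrow> a \<le> p u"
      using dominated_extension_le[OF p subM _ _ plus minus, of "u - k *\<^sub>R y" "a - k * c" k] M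
      unfolding dominated_graph_def by auto
  qed
  moreover have "M \<subseteq> G" "(y, c) \<in> G" unfolding G_def by (auto intro: span_base)
  moreover have "(y, c) \<notin> M" using y by (metis fst_conv image_eqI)
  ultimately show ?thesis by blast
qed

lemma dominated_graph_Union_chain:
  assumes C: "C \<in> chains {G. dominated_graph p z G}" and "C \<noteq> {}"
  shows "dominated_graph p z (\<Union>C)"
proof -
  have good: "\<And>G. G \<in> C \<Longrightarrow> dominated_graph p z G"
    and ch: "\<And>G H. G \<in> C \<Longrightarrow> H \<in> C \<Longrightarrow> G \<subseteq> H \<or> H \<subseteq> G"
    using C unfolding chains_def chain_subset_def by blast+
  have "subspace (\<Union>C)"
    unfolding subspace_def
  proof (intro conjI ballI allI)
    show "0 \<in> \<Union>C" using \<open>C \<noteq> {}\<close> good unfolding dominated_graph_def by (blast intro: subspace_0)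
  next
    fix v w assume "v \<in> \<Union>C" "w \<in> \<Union>C"
    then obtain G where "G \<in> C" "v \<in> G" "w \<in> G" using ch by blast
    then show "v + w \<in> \<Union>C" using good unfolding dominated_graph_def by (blast intro: subspace_add)
  next
    fix c :: real and v assume "v \<in> \<Union>C"
    then show "c *\<^sub>R v \<in> \<Union>C" using good unfolding dominated_graph_def by (blast intro: subspace_scale)
  qed
  then show ?thesis using good \<open>C \<noteq> {}\<close> unfolding dominated_graph_def by blast
qed

theorem algebraic_hahn_banach:
  fixes p :: "'a::real_vector \<Rightarrow> real"
  assumes p: "sublinear p" and z: "z \<noteq> 0" and line: "\<And>t. t \<le> p (t *\<^sub>R z)"
  obtains L where "linear L" "\<And>v. L v \<le> p v" "L z = 1"
proof -
  define A where "A = {G. dominated_graph p z G}"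
  have "(z, 1) \<in> span {(z, 1 :: real)}" by (simp add: span_base)
  moreover have "(\<forall>a. (0, a) \<in> span {(z, 1)} \<longrightarrow> a = 0) \<and> (\<forall>(u, a)\<in>span {(z, 1)}. a \<le> p u)"
    unfolding span_singleton using z line by auto
  ultimately have "dominated_graph p z (span {(z, 1)})"
    unfolding dominated_graph_def by simp
  then have "\<exists>M\<in>A. \<forall>G\<in>A. M \<subseteq> G \<longrightarrow> G = M"
    using dominated_graph_Union_chain unfolding A_def by (intro Zorn_Lemma2) blast
  then obtain M where M: "dominated_graph p z M" and max: "\<And>G. dominated_graph p z G \<Longrightarrow> M \<subseteq> G \<Longrightarrow> G = M"
    unfolding A_def by blast
  have total: "v \<in> fst ` M" for v
    using dominated_graph_extend[OF p M] max by blast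
  define L where "L v = (THE a. (v, a) \<in> M)" for v
  have L_eq: "L v = a" if "(v, a) \<in> M" for v a
    unfolding L_def using that dominated_graph_functional[OF M] by blast
  have graph: "(v, L v) \<in> M" for v
    using total[of v] L_eq by force
  have subM: "subspace M" using M unfolding dominated_graph_def by blast
  show thesis
  proof
    show "linear L"
    proof
      show "L (u + v) = L u + L v" for u v
        using subspace_add[OF subM graph[of u] graph[of v]] by (intro L_eq) simp
      show "L (c *\<^sub>R v) = c *\<^sub>R L v" for c v
        using subspace_scale[OF subM graph[of v], of c] by (intro L_eq) simp
    qed
    show "L v \<le> p v" for v using M graph[of v] unfolding dominated_graph_def by blast
    show "L z = 1" using M unfolding dominated_graph_def by (blast intro: L_eq)
  qed
qed

section \<open>Seminorms and the Minkowski gauge\<close>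

lemma seminorm_triangle: "seminorm p \<Longrightarrow> p (x + y) \<le> p x + p y"
  unfolding seminorm_def by blast

lemma seminorm_scaleR: "seminorm p \<Longrightarrow> p (c *\<^sub>R x) = \<bar>c\<bar> * p x"
  unfolding seminorm_def by blast

lemma seminorm_zero: "seminorm p \<Longrightarrow> p 0 = 0"
  using seminorm_scaleR[of p 0 0] by simp

lemma seminorm_minus: "seminorm p \<Longrightarrow> p (- x) = p x"
  using seminorm_scaleR[of p "- 1" x] by simp

lemma seminorm_nonneg: "seminorm p \<Longrightarrow> 0 \<le> p x"
  using seminorm_triangle[of p x "- x"] seminorm_zero[of p] seminorm_minus[of p x] by simp

lemma seminorm_sum: "(\<And>q. q \<in> F \<Longrightarrow> seminorm q) \<Longrightarrow> seminorm (\<lambda>v. \<Sum>q\<in>F. q v)"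
  unfolding seminorm_def by (simp add: sum.distrib[symmetric] sum_mono sum_distrib_left)

lemma seminorm_le_sum:
  "(\<And>q. q \<in> F \<Longrightarrow> seminorm q) \<Longrightarrow> finite F \<Longrightarrow> p \<in> F \<Longrightarrow> p v \<le> (\<Sum>q\<in>F. q v)"
  by (rule member_le_sum) (auto intro: seminorm_nonneg)

lemma seminorm_abs: "seminorm (abs :: real \<Rightarrow> real)"
  unfolding seminorm_def by (simp add: abs_triangle_ineq abs_mult)

lemma seminorm_pair:
  assumes "seminorm q1" "seminorm q2"
  shows "seminorm (\<lambda>z. q1 (fst z) + q2 (snd z))"
  unfolding seminorm_def
proof (intro conjI allI)
  show "q1 (fst (z + w)) + q2 (snd (z + w)) \<le> q1 (fst z) + q2 (snd z) + (q1 (fst w) + q2 (snd w))"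
    for z w :: "'a \<times> 'b"
    using seminorm_triangle[OF assms(1), of "fst z" "fst w"]
      seminorm_triangle[OF assms(2), of "snd z" "snd w"] by simp
  show "q1 (fst (c *\<^sub>R z)) + q2 (snd (c *\<^sub>R z)) = \<bar>c\<bar> * (q1 (fst z) + q2 (snd z))"
    for c and z :: "'a \<times> 'b"
    using seminorm_scaleR[OF assms(1)] seminorm_scaleR[OF assms(2)] by (simp add: distrib_left)
qed

definition minkowski_gauge :: "'a::real_vector set \<Rightarrow> 'a \<Rightarrow> real" where
  "minkowski_gauge K z = Inf {l. 0 < l \<and> (1 / l) *\<^sub>R z \<in> K}"

context
  fixes K :: "'a::real_vector set" and Q :: "'a \<Rightarrow> real" and \<delta> :: real
  assumes K: "convex K" and Q: "seminorm Q" and \<delta>: "0 < \<delta>"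
    and absorbing: "\<And>n. Q n < \<delta> \<Longrightarrow> n \<in> K"
begin

lemma gauge_scale_mem: "0 < l \<Longrightarrow> Q z / \<delta> < l \<Longrightarrow> (1 / l) *\<^sub>R z \<in> K"
  using \<delta> by (intro absorbing) (simp add: seminorm_scaleR[OF Q] divide_less_eq mult.commute)

lemma gauge_scales_nonempty: "{l. 0 < l \<and> (1 / l) *\<^sub>R z \<in> K} \<noteq> {}"
proof -
  have "0 < Q z / \<delta> + 1" using seminorm_nonneg[OF Q, of z] \<delta> by (simp add: add_nonneg_pos)
  then show ?thesis using gauge_scale_mem[of "Q z / \<delta> + 1" z] by auto
qed

lemma gauge_le: "0 < l \<Longrightarrow> (1 / l) *\<^sub>R z \<in> K \<Longrightarrow> minkowski_gauge K z \<le> l"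
  unfolding minkowski_gauge_def by (rule cInf_lower) (auto intro: bdd_belowI[of _ 0])

lemma gauge_lessD:
  assumes "minkowski_gauge K z < a"
  obtains l where "0 < l" "(1 / l) *\<^sub>R z \<in> K" "l < a"
  using cInf_lessD[OF gauge_scales_nonempty assms[unfolded minkowski_gauge_def]] by blast

lemma gauge_nonneg: "0 \<le> minkowski_gauge K z"
  unfolding minkowski_gauge_def by (rule cInf_greatest[OF gauge_scales_nonempty]) auto

lemma gauge_le_seminorm: "minkowski_gauge K z \<le> Q z / \<delta>"
proof (rule field_le_epsilon)
  fix e :: real assume "0 < e"
  then show "minkowski_gauge K z \<le> Q z / \<delta> + e"
    using gauge_le gauge_scale_mem seminorm_nonneg[OF Q, of z] \<delta> by (simp add: add_nonneg_pos)
qed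

lemma gauge_le_one: "z \<in> K \<Longrightarrow> minkowski_gauge K z \<le> 1"
  using gauge_le[of 1 z] by simp

lemma gauge_ge_one:
  assumes "z \<notin> K" shows "1 \<le> minkowski_gauge K z"
proof (rule ccontr)
  assume "\<not> 1 \<le> minkowski_gauge K z"
  then have "minkowski_gauge K z < 1" by simp
  then obtain l where l: "0 < l" "(1 / l) *\<^sub>R z \<in> K" "l < 1" by (rule gauge_lessD)
  have "0 \<in> K" using absorbing seminorm_zero[OF Q] \<delta> by simp
  then have "l *\<^sub>R ((1 / l) *\<^sub>R z) + (1 - l) *\<^sub>R 0 \<in> K" using l by (intro convexD[OF K]) auto
  then show False using l assms by simp
qed

lemma gauge_add: "minkowski_gauge K (x + y) \<le> minkowski_gauge K x + minkowski_gauge K y"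
proof (rule field_le_epsilon)
  fix e :: real assume "0 < e"
  then obtain l1 l2 where l1: "0 < l1" "(1 / l1) *\<^sub>R x \<in> K" "l1 < minkowski_gauge K x + e / 2"
    and l2: "0 < l2" "(1 / l2) *\<^sub>R y \<in> K" "l2 < minkowski_gauge K y + e / 2"
    using gauge_lessD[of x "minkowski_gauge K x + e / 2"] gauge_lessD[of y "minkowski_gauge K y + e / 2"]
    by (metis half_gt_zero less_add_same_cancel1)
  have "(l1 / (l1 + l2)) *\<^sub>R ((1 / l1) *\<^sub>R x) + (l2 / (l1 + l2)) *\<^sub>R ((1 / l2) *\<^sub>R y) \<in> K"
    using l1 l2 by (intro convexD[OF K]) (auto simp: add_divide_distrib[symmetric])
  then have "(1 / (l1 + l2)) *\<^sub>R (x + y) \<in> K" using l1 l2 by (simp add: scaleR_add_right)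
  then have "minkowski_gauge K (x + y) \<le> l1 + l2" using l1 l2 by (intro gauge_le) auto
  then show "minkowski_gauge K (x + y) \<le> minkowski_gauge K x + minkowski_gauge K y + e"
    using l1 l2 by simp
qed

lemma gauge_scaleR_le:
  assumes c: "0 < c" shows "minkowski_gauge K (c *\<^sub>R z) \<le> c * minkowski_gauge K z"
proof -
  have "minkowski_gauge K (c *\<^sub>R z) / c \<le> minkowski_gauge K z"
    unfolding minkowski_gauge_def[of K z]
  proof (rule cInf_greatest[OF gauge_scales_nonempty])
    fix l assume "l \<in> {l. 0 < l \<and> (1 / l) *\<^sub>R z \<in> K}"
    then have "minkowski_gauge K (c *\<^sub>R z) \<le> c * l" using c by (intro gauge_le) auto
    then show "minkowski_gauge K (c *\<^sub>R z) / c \<le> l" using c by (simp add: divide_le_eq mult.commute)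
  qed
  then show ?thesis using c by (simp add: divide_le_eq mult.commute)
qed

lemma sublinear_gauge: "sublinear (minkowski_gauge K)"
  unfolding sublinear_def
proof (intro conjI allI impI gauge_add)
  fix c :: real and z assume "0 \<le> c"
  show "minkowski_gauge K (c *\<^sub>R z) = c * minkowski_gauge K z"
  proof (cases "c = 0")
    case True
    have "minkowski_gauge K 0 \<le> 0"
      using gauge_le_seminorm[of 0] seminorm_zero[OF Q] by simp
    then show ?thesis using True gauge_nonneg[of 0] by simp
  next
    case False
    with \<open>0 \<le> c\<close> have c: "0 < c" by simp
    have "minkowski_gauge K z \<le> (1 / c) * minkowski_gauge K (c *\<^sub>R z)"
      using gauge_scaleR_le[of "1 / c" "c *\<^sub>R z"] c by simp
    then show ?thesis using gauge_scaleR_le[OF c, of z] c by (simp add: field_simps)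
  qed
qed

lemma gauge_separation:
  assumes out: "z \<notin> K"
  obtains L where "linear L" "\<And>v. \<bar>L v\<bar> \<le> Q v / \<delta>" "L z = 1" "\<And>v. v \<in> K \<Longrightarrow> L v \<le> 1"
proof -
  have "z \<noteq> 0" using out absorbing seminorm_zero[OF Q] \<delta> by auto
  moreover have "t \<le> minkowski_gauge K (t *\<^sub>R z)" for t
  proof (cases "0 \<le> t")
    case True
    then show ?thesis using sublinear_gauge gauge_ge_one[OF out] unfolding sublinear_def
      by (simp add: mult_le_cancel_left1)
  qed (use gauge_nonneg[of "t *\<^sub>R z"] in simp)
  ultimately obtain L where L: "linear L" "\<And>v. L v \<le> minkowski_gauge K v" "L z = 1"
    using algebraic_hahn_banach[OF sublinear_gauge] by blast
  have "\<bar>L v\<bar> \<le> Q v / \<delta>" for v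
    using L(2)[of v] L(2)[of "- v"] gauge_le_seminorm[of v] gauge_le_seminorm[of "- v"]
      linear_neg[OF L(1), of v] seminorm_minus[OF Q, of v] by (simp add: abs_le_iff)
  then show thesis using that L gauge_le_one order_trans by blast
qed

end

lemma convex_seminorm_ball: "seminorm Q \<Longrightarrow> convex {n. Q n < \<delta>}"
proof (rule convexI)
  fix x y :: 'a and u v :: real
  assume Q: "seminorm Q" and "x \<in> {n. Q n < \<delta>}" "y \<in> {n. Q n < \<delta>}" "0 \<le> u" "0 \<le> v" "u + v = 1"
  then have "u * Q x + v * Q y < \<delta>" by (intro convex_bound_lt) auto
  moreover have "Q (u *\<^sub>R x + v *\<^sub>R y) \<le> u * Q x + v * Q y"
    using seminorm_triangle[OF Q] seminorm_scaleR[OF Q] \<open>0 \<le> u\<close> \<open>0 \<le> v\<close> by (metis abs_of_nonneg)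
  ultimately show "u *\<^sub>R x + v *\<^sub>R y \<in> {n. Q n < \<delta>}" by simp
qed

theorem seminorm_convex_separation:
  fixes Q :: "'a::real_vector \<Rightarrow> real"
  assumes Q: "seminorm Q" and C: "convex C" and \<delta>: "0 < \<delta>"
    and far: "\<And>c. c \<in> C \<Longrightarrow> \<delta> \<le> Q (c - p)"
  obtains L k \<theta> where "linear L" "\<And>z. \<bar>L z\<bar> \<le> k * Q z" "0 < \<theta>" "\<And>c. c \<in> C \<Longrightarrow> L c + \<theta> \<le> L p"
proof (cases "C = {}")
  case True
  then show thesis using that[of "\<lambda>z. 0" 0 1] by (simp add: linear_zero)
next
  case False
  then obtain c0 where c0: "c0 \<in> C" by blast
  define K where "K = (\<Union>a\<in>(\<lambda>c. c - c0) ` C. \<Union>n\<in>{n. Q n < \<delta>}. {a + n})"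
  have K: "convex K"
    unfolding K_def by (intro convex_sums convex_translation_subtract C convex_seminorm_ball Q)
  have inK: "c - c0 + n \<in> K" if "c \<in> C" "Q n < \<delta>" for c n
    using that unfolding K_def by blast
  have absorbing: "n \<in> K" if "Q n < \<delta>" for n
    using inK[OF c0 that] by simp
  have "p - c0 \<notin> K"
  proof
    assume "p - c0 \<in> K"
    then obtain c n where "c \<in> C" "Q n < \<delta>" "p - c0 = c - c0 + n" unfolding K_def by blast
    then show False using far[of c] seminorm_minus[OF Q, of n] by (simp add: algebra_simps)
  qed
  then obtain L where L: "linear L" "\<And>v. \<bar>L v\<bar> \<le> Q v / \<delta>" "L (p - c0) = 1" "\<And>v. v \<in> K \<Longrightarrow> L v \<le> 1"
    using gauge_separation[OF K Q \<delta> absorbing] by blast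
  define \<theta> where "\<theta> = \<delta> / (Q (p - c0) + 1)"
  have \<theta>: "0 < \<theta>" using \<delta> seminorm_nonneg[OF Q, of "p - c0"] unfolding \<theta>_def by simp
  have "Q (\<theta> *\<^sub>R (p - c0)) < \<delta>"
    using \<delta> seminorm_nonneg[OF Q, of "p - c0"] by (simp add: \<theta>_def seminorm_scaleR[OF Q] divide_less_eq)
  then have le1: "L (c - c0 + \<theta> *\<^sub>R (p - c0)) \<le> 1" if "c \<in> C" for c
    using L(4) inK that by blast
  have "L c + \<theta> \<le> L p" if "c \<in> C" for c
  proof -
    have "L (c - c0 + \<theta> *\<^sub>R (p - c0)) = L c - L c0 + \<theta> * L (p - c0)"
      using L(1) by (simp add: linear_add linear_diff linear_scale)
    then show ?thesis using le1[OF that] L(1,3) by (simp add: linear_diff)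
  qed
  then show thesis using that[of L "1 / \<delta>"] L(1,2) \<theta> by simp
qed

section \<open>The dual of a locally convex space\<close>

lemma lcs_seminorm: "lcs P \<Longrightarrow> p \<in> P \<Longrightarrow> seminorm p"
  unfolding lcs_def by blast

lemma lc_dual_linear: "\<phi> \<in> lc_dual P \<Longrightarrow> linear \<phi>"
  unfolding lc_dual_def by simp

lemma lc_dual_bound:
  assumes lcs: "lcs P" and \<phi>: "\<phi> \<in> lc_dual P"
  obtains F k where "finite F" "F \<subseteq> P" "0 \<le> k" "\<And>v. \<bar>\<phi> v\<bar> \<le> k * (\<Sum>p\<in>F. p v)"
proof -
  have lin: "linear \<phi>" and op: "lc_open P {y. \<bar>\<phi> y\<bar> < 1}"
    using \<phi> unfolding lc_dual_def by auto
  have "0 \<in> {y. \<bar>\<phi> y\<bar> < 1}" using linear_0[OF lin] by simp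
  with op[unfolded lc_open_def]
  have "\<exists>F e. finite F \<and> F \<subseteq> P \<and> 0 < e \<and> lc_nbhd F e 0 \<subseteq> {y. \<bar>\<phi> y\<bar> < 1}"
    by (rule bspec)
  then obtain F e where F: "finite F" "F \<subseteq> P" "0 < e" and nbhd: "lc_nbhd F e 0 \<subseteq> {y. \<bar>\<phi> y\<bar> < 1}"
    by blast
  have sn: "\<And>p. p \<in> F \<Longrightarrow> seminorm p" using F(2) lcs_seminorm[OF lcs] by blast
  have "\<bar>\<phi> v\<bar> \<le> (\<Sum>p\<in>F. p v) / e" for v
  proof (rule field_le_epsilon)
    fix \<tau> :: real assume "0 < \<tau>"
    define l where "l = (\<Sum>p\<in>F. p v) / e + \<tau>"
    have S: "0 \<le> (\<Sum>p\<in>F. p v)" using seminorm_nonneg[OF seminorm_sum[OF sn]] .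
    have l: "0 < l" using \<open>0 < \<tau>\<close> F(3) S unfolding l_def by (simp add: add_nonneg_pos)
    have "(\<Sum>p\<in>F. p v) < e * l" using \<open>0 < \<tau>\<close> F(3) unfolding l_def by (simp add: distrib_left)
    then have l: "0 < l" "(\<Sum>p\<in>F. p v) / l < e" using l by (simp_all add: divide_less_eq mult.commute)
    have "(1 / l) *\<^sub>R v \<in> lc_nbhd F e 0" unfolding lc_nbhd_def
    proof (intro CollectI ballI)
      fix p assume "p \<in> F"
      then have "p ((1 / l) *\<^sub>R v) = p v / l" using seminorm_scaleR[OF sn[OF \<open>p \<in> F\<close>]] l(1) by simp
      also have "\<dots> \<le> (\<Sum>p\<in>F. p v) / l"
        using seminorm_le_sum[OF sn F(1) \<open>p \<in> F\<close>] l(1) by (simp add: divide_right_mono)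
      finally show "p ((1 / l) *\<^sub>R v - 0) < e" using l(2) by simp
    qed
    then have "\<bar>\<phi> v\<bar> / l < 1" using nbhd linear_scale[OF lin] l(1) by (auto simp: abs_mult)
    then show "\<bar>\<phi> v\<bar> \<le> (\<Sum>p\<in>F. p v) / e + \<tau>" using l(1) unfolding l_def by simp
  qed
  then show thesis using that[OF F(1,2), of "1 / e"] F(3) by simp
qed

lemma lc_dualI:
  assumes lcs: "lcs P" and lin: "linear \<phi>" and F: "finite F" "F \<subseteq> P"
    and bound: "\<And>v. \<bar>\<phi> v\<bar> \<le> k * (\<Sum>p\<in>F. p v)"
  shows "\<phi> \<in> lc_dual P"
  unfolding lc_dual_def lc_open_def
proof (intro CollectI conjI lin ballI)
  fix y0 assume "y0 \<in> {y. \<bar>\<phi> y\<bar> < 1}"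
  then have y0: "\<bar>\<phi> y0\<bar> < 1" by simp
  have sn: "\<And>p. p \<in> F \<Longrightarrow> seminorm p" using F(2) lcs_seminorm[OF lcs] by blast
  define d where "d = (1 - \<bar>\<phi> y0\<bar>) / ((\<bar>k\<bar> + 1) * (card F + 1))"
  have d: "0 < d" using y0 unfolding d_def by (simp add: add_pos_nonneg)
  have "y \<in> {y. \<bar>\<phi> y\<bar> < 1}" if "y \<in> lc_nbhd F d y0" for y
  proof -
    have S: "0 \<le> (\<Sum>p\<in>F. p (y - y0))" using seminorm_nonneg[OF seminorm_sum[OF sn]] .
    have "(\<Sum>p\<in>F. p (y - y0)) \<le> card F * d"
      using that sum_bounded_above[of F "\<lambda>p. p (y - y0)" d] unfolding lc_nbhd_def by (simp add: less_imp_le)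
    have "\<bar>\<phi> y - \<phi> y0\<bar> = \<bar>\<phi> (y - y0)\<bar>" using linear_diff[OF lin] by simp
    also have "\<dots> \<le> k * (\<Sum>p\<in>F. p (y - y0))" by (rule bound)
    also have "\<dots> \<le> (\<bar>k\<bar> + 1) * (\<Sum>p\<in>F. p (y - y0))" using S by (intro mult_right_mono) auto
    also have "\<dots> \<le> (\<bar>k\<bar> + 1) * (card F * d)"
      using \<open>(\<Sum>p\<in>F. p (y - y0)) \<le> card F * d\<close> by (intro mult_left_mono) auto
    also have "\<dots> < (\<bar>k\<bar> + 1) * ((card F + 1) * d)" using d by (intro mult_strict_left_mono) auto
    also have "\<dots> = 1 - \<bar>\<phi> y0\<bar>" unfolding d_def by simp
    finally show ?thesis by simp
  qed
  then show "\<exists>F' e. finite F' \<and> F' \<subseteq> P \<and> 0 < e \<and> lc_nbhd F' e y0 \<subseteq> {y. \<bar>\<phi> y\<bar> < 1}"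
    using F d by blast
qed

lemma lc_dual_scale:
  assumes lcs: "lcs P" and \<phi>: "\<phi> \<in> lc_dual P"
  shows "(\<lambda>z. c * \<phi> z) \<in> lc_dual P"
proof -
  obtain F k where F: "finite F" "F \<subseteq> P" "0 \<le> k" "\<And>v. \<bar>\<phi> v\<bar> \<le> k * (\<Sum>p\<in>F. p v)"
    using lc_dual_bound[OF lcs \<phi>] by blast
  have "\<bar>c * \<phi> v\<bar> \<le> (\<bar>c\<bar> * k) * (\<Sum>p\<in>F. p v)" for v
    using mult_left_mono[OF F(4)[of v], of "\<bar>c\<bar>"] by (simp add: abs_mult mult.assoc)
  moreover have "linear (\<lambda>z. c * \<phi> z)"
    using linear_add[OF lc_dual_linear[OF \<phi>]] linear_scale[OF lc_dual_linear[OF \<phi>]]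
    by (intro linearI) (simp_all add: algebra_simps)
  ultimately show ?thesis using F by (intro lc_dualI[OF lcs]) auto
qed

lemma lc_dual_add:
  assumes lcs: "lcs P" and \<phi>: "\<phi> \<in> lc_dual P" and \<psi>: "\<psi> \<in> lc_dual P"
  shows "(\<lambda>z. \<phi> z + \<psi> z) \<in> lc_dual P"
proof -
  obtain F1 k1 where F1: "finite F1" "F1 \<subseteq> P" "0 \<le> k1" "\<And>v. \<bar>\<phi> v\<bar> \<le> k1 * (\<Sum>p\<in>F1. p v)"
    using lc_dual_bound[OF lcs \<phi>] by blast
  obtain F2 k2 where F2: "finite F2" "F2 \<subseteq> P" "0 \<le> k2" "\<And>v. \<bar>\<psi> v\<bar> \<le> k2 * (\<Sum>p\<in>F2. p v)"
    using lc_dual_bound[OF lcs \<psi>] by blast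
  have sn: "\<And>p. p \<in> F1 \<union> F2 \<Longrightarrow> seminorm p" using F1(2) F2(2) lcs_seminorm[OF lcs] by blast
  have sub: "(\<Sum>p\<in>F. p v) \<le> (\<Sum>p\<in>F1 \<union> F2. p v)" if "F \<subseteq> F1 \<union> F2" for F v
    using that sn F1(1) F2(1) by (intro sum_mono2) (auto intro: seminorm_nonneg)
  have "\<bar>\<phi> v + \<psi> v\<bar> \<le> (k1 + k2) * (\<Sum>p\<in>F1 \<union> F2. p v)" for v
  proof -
    have "\<bar>\<phi> v + \<psi> v\<bar> \<le> k1 * (\<Sum>p\<in>F1. p v) + k2 * (\<Sum>p\<in>F2. p v)"
      using F1(4)[of v] F2(4)[of v] by linarith
    also have "\<dots> \<le> k1 * (\<Sum>p\<in>F1 \<union> F2. p v) + k2 * (\<Sum>p\<in>F1 \<union> F2. p v)"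
      using F1(3) F2(3) sub[of F1 v] sub[of F2 v] by (intro add_mono mult_left_mono) auto
    finally show ?thesis by (simp add: distrib_right)
  qed
  moreover have "linear (\<lambda>z. \<phi> z + \<psi> z)"
    using lc_dual_linear[OF \<phi>] lc_dual_linear[OF \<psi>] by (rule linear_compose_add)
  ultimately show ?thesis using F1(1,2) F2(1,2) lc_dualI[OF lcs, of _ "F1 \<union> F2" "k1 + k2"] by blast
qed

section \<open>Epsilon-subgradients with prescribed slope\<close>

lemma lc_lsc_nbhd:
  assumes "lc_lsc P g" and "ereal c < g y"
  obtains F d where "finite F" "F \<subseteq> P" "0 < d" "\<And>z. z \<in> lc_nbhd F d y \<Longrightarrow> ereal c < g z"
proof -
  have "lc_open P {z. ereal c < g z}" using assms(1) unfolding lc_lsc_def by blast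
  with assms(2) have "\<exists>F d. finite F \<and> F \<subseteq> P \<and> 0 < d \<and> lc_nbhd F d y \<subseteq> {z. ereal c < g z}"
    unfolding lc_open_def by blast
  then show thesis using that by blast
qed

lemma convex_fun_le:
  assumes g: "convex_fun g" and "g y1 \<le> ereal m1" "g y2 \<le> ereal m2" and u: "0 \<le> u" "u \<le> 1"
  shows "g (u *\<^sub>R y1 + (1 - u) *\<^sub>R y2) \<le> ereal (u * m1 + (1 - u) * m2)"
proof -
  have "g (u *\<^sub>R y1 + (1 - u) *\<^sub>R y2) \<le> ereal u * g y1 + ereal (1 - u) * g y2"
    using g u unfolding convex_fun_def by blast
  also have "\<dots> \<le> ereal u * ereal m1 + ereal (1 - u) * ereal m2"
    using assms(2,3) u by (intro add_mono ereal_mult_left_mono) auto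
  finally show ?thesis by simp
qed

lemma convex_fun_segment:
  assumes "convex_fun g" "g x \<le> ereal a" "g y \<le> ereal b" "0 \<le> u" "u \<le> 1"
  shows "g (x + u *\<^sub>R (y - x)) \<le> ereal (a + u * (b - a))"
  using convex_fun_le[OF assms(1,3,2,4,5)] by (simp add: algebra_simps)

lemma eventually_mult_less_at_right: "0 < b \<Longrightarrow> \<forall>\<^sub>F \<sigma> in at_right 0. \<sigma> * a < (b::real)"
  by (rule order_tendstoD(2)[of _ 0]) (auto intro!: tendsto_eq_intros)

lemma eventually_at_right_zero_exists:
  "\<forall>\<^sub>F \<sigma> in at_right 0. P \<sigma> \<Longrightarrow> \<exists>\<sigma>::real. 0 < \<sigma> \<and> P \<sigma>"
  using eventually_happens'[OF trivial_limit_at_right_real eventually_conj[OF eventually_at_right_less]]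
  by blast

lemma proper_fun_finite:
  assumes "proper_fun g" "g y \<noteq> \<infinity>"
  obtains r where "g y = ereal r"
  using assms unfolding proper_fun_def by (cases "g y") auto

lemma SUP_proper_fun_not_MInf:
  "(\<And>t. proper_fun (ft t)) \<Longrightarrow> (SUP t. ft t y) \<noteq> - \<infinity>"
  using SUP_upper[of undefined UNIV "\<lambda>t. ft t y"] unfolding proper_fun_def by fastforce

lemma eps_subdiff_finite_iff:
  "g x = ereal gx \<Longrightarrow>
    a \<in> eps_subdiff P e g x \<longleftrightarrow> a \<in> lc_dual P \<and> (\<forall>y. ereal gx + ereal (a (y - x)) - ereal e \<le> g y)"
  unfolding eps_subdiff_def by simp

text \<open>The set below is the epigraph of \<open>g\<close> swept along the ray of slope \<open>q\<close> in the direction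
  \<open>- w\<close>; separating it from \<open>(x, g x - \<epsilon>)\<close> yields an \<open>\<epsilon>\<close>-subgradient with slope at least
  \<open>q\<close> along \<open>w\<close>.\<close>

lemma convex_epigraph_ray:
  assumes g: "convex_fun g"
  shows "convex {(y - s *\<^sub>R w, m - s * q) | y m s. g y \<le> ereal m \<and> 0 \<le> s}"
proof (rule convexI)
  fix c1 c2 and u v :: real
  assume "c1 \<in> {(y - s *\<^sub>R w, m - s * q) | y m s. g y \<le> ereal m \<and> 0 \<le> s}"
    and "c2 \<in> {(y - s *\<^sub>R w, m - s * q) | y m s. g y \<le> ereal m \<and> 0 \<le> s}"
    and uv: "0 \<le> u" "0 \<le> v" "u + v = 1"
  then obtain y1 m1 s1 y2 m2 s2 where
    c1: "c1 = (y1 - s1 *\<^sub>R w, m1 - s1 * q)" "g y1 \<le> ereal m1" "0 \<le> s1" and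
    c2: "c2 = (y2 - s2 *\<^sub>R w, m2 - s2 * q)" "g y2 \<le> ereal m2" "0 \<le> s2"
    by blast
  have "g (u *\<^sub>R y1 + v *\<^sub>R y2) \<le> ereal (u * m1 + v * m2)"
    using convex_fun_le[OF g c1(2) c2(2), of u] uv by (simp add: eq_diff_eq[symmetric])
  moreover have "u *\<^sub>R c1 + v *\<^sub>R c2 = ((u *\<^sub>R y1 + v *\<^sub>R y2) - (u * s1 + v * s2) *\<^sub>R w,
      (u * m1 + v * m2) - (u * s1 + v * s2) * q)"
    unfolding c1(1) c2(1) by (simp add: algebra_simps)
  ultimately show "u *\<^sub>R c1 + v *\<^sub>R c2 \<in> {(y - s *\<^sub>R w, m - s * q) | y m s. g y \<le> ereal m \<and> 0 \<le> s}"
    using uv c1(3) c2(3) by fastforce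
qed

lemma lc_dual_of_pair_functional:
  assumes lcs: "lcs P" and F: "finite F" "F \<subseteq> P" and L: "linear L"
    "\<And>z. \<bar>L z\<bar> \<le> k * ((\<Sum>p\<in>F. p (fst z)) + \<bar>snd z\<bar>)" and \<kappa>: "0 < \<kappa>" "L (0, 1) = - \<kappa>"
  obtains a where "a \<in> lc_dual P" "\<And>v \<nu>. L (v, \<nu>) = \<kappa> * (a v - \<nu>)"
proof
  define a where "a v = L (v, 0) / \<kappa>" for v
  show "L (v, \<nu>) = \<kappa> * (a v - \<nu>)" for v \<nu>
    using linear_add[OF L(1), of "(v, 0)" "\<nu> *\<^sub>R (0, 1)"] linear_scale[OF L(1), of \<nu> "(0, 1)"] \<kappa>
    unfolding a_def by (simp add: algebra_simps)
  have "linear a"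
  proof
    show "a (u + v) = a u + a v" for u v
      using linear_add[OF L(1), of "(u, 0)" "(v, 0)"] unfolding a_def by (simp add: add_divide_distrib)
    show "a (c *\<^sub>R v) = c *\<^sub>R a v" for c v
      using linear_scale[OF L(1), of c "(v, 0)"] unfolding a_def by simp
  qed
  moreover have "\<bar>a v\<bar> \<le> (k / \<kappa>) * (\<Sum>p\<in>F. p v)" for v
    using L(2)[of "(v, 0)"] \<kappa>(1) unfolding a_def by (simp add: abs_div divide_right_mono)
  ultimately show "a \<in> lc_dual P" by (rule lc_dualI[OF lcs _ F])
qed

lemma eps_subgradient_of_separation:
  assumes lcs: "lcs P" and g: "proper_fun g" and gx: "g x = ereal gx" and \<epsilon>: "0 < \<epsilon>"
    and F: "finite F" "F \<subseteq> P" and L: "linear L" "\<And>z. \<bar>L z\<bar> \<le> k * ((\<Sum>p\<in>F. p (fst z)) + \<bar>snd z\<bar>)"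
    and \<theta>: "0 < \<theta>"
    and sep: "\<And>y m s. g y \<le> ereal m \<Longrightarrow> 0 \<le> s \<Longrightarrow> L (y - s *\<^sub>R w, m - s * q) + \<theta> \<le> L (x, gx - \<epsilon>)"
  shows "\<exists>a\<in>eps_subdiff P \<epsilon> g x. q \<le> a w"
proof -
  define \<kappa> where "\<kappa> = - L (0, 1)"
  have "L (x, gx - \<epsilon>) = L (x, gx) + \<epsilon> * \<kappa>"
    using linear_diff[OF L(1), of "(x, gx)" "\<epsilon> *\<^sub>R (0, 1)"] linear_scale[OF L(1), of \<epsilon> "(0, 1)"]
    unfolding \<kappa>_def by simp
  then have "0 < \<epsilon> * \<kappa>" using sep[of x gx 0] gx \<theta> by simp
  then have "0 < \<kappa>" using zero_less_mult_pos \<epsilon> by blast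
  then have \<kappa>: "0 < \<kappa>" "L (0, 1) = - \<kappa>" unfolding \<kappa>_def by simp_all
  then obtain a where dual: "a \<in> lc_dual P" and L_eq: "\<And>v \<nu>. L (v, \<nu>) = \<kappa> * (a v - \<nu>)"
    using lc_dual_of_pair_functional[OF lcs F L] by blast
  have lin: "linear a" using dual by (rule lc_dual_linear)
  have key: "a (y - x) + s * (q - a w) < m - gx + \<epsilon>" if "g y \<le> ereal m" "0 \<le> s" for y m s
  proof -
    have "\<kappa> * (a (y - x) + s * (q - a w) - (m - gx + \<epsilon>))
        = L (y - s *\<^sub>R w, m - s * q) - L (x, gx - \<epsilon>)"
      unfolding L_eq linear_diff[OF lin] linear_scale[OF lin] by (simp add: algebra_simps)
    then have "\<kappa> * (a (y - x) + s * (q - a w) - (m - gx + \<epsilon>)) < 0"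
      using sep[OF that] \<theta> by simp
    then show ?thesis using \<kappa> by (simp add: mult_less_0_iff)
  qed
  have "ereal gx + ereal (a (y - x)) - ereal \<epsilon> \<le> g y" for y
  proof (cases "g y")
    case (real m)
    then show ?thesis using key[of y m 0] by simp
  qed (use g[unfolded proper_fun_def] in auto)
  then have "a \<in> eps_subdiff P \<epsilon> g x" using dual gx by (simp add: eps_subdiff_finite_iff)
  moreover have "q \<le> a w"
  proof (rule ccontr)
    assume "\<not> q \<le> a w"
    then show False using key[of x gx "\<epsilon> / (q - a w)"] gx \<epsilon> linear_0[OF lin] by simp
  qed
  ultimately show ?thesis by blast
qed

lemma lc_nbhd_ray_start:
  assumes sn: "\<And>p. p \<in> F \<Longrightarrow> seminorm p" and v: "\<And>p. p \<in> F \<Longrightarrow> p (y - s *\<^sub>R w - x) < d1"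
    and w: "\<And>p. p \<in> F \<Longrightarrow> \<sigma> * p w < d2" and s: "0 \<le> s" "s \<le> \<sigma>"
  shows "y \<in> lc_nbhd F (d1 + d2) x"
  unfolding lc_nbhd_def
proof (intro CollectI ballI)
  fix p assume p: "p \<in> F"
  have "p (y - x) \<le> p (y - s *\<^sub>R w - x) + s * p w"
    using seminorm_triangle[OF sn[OF p], of "y - s *\<^sub>R w - x" "s *\<^sub>R w"] seminorm_scaleR[OF sn[OF p], of s w] s
    by simp
  also have "\<dots> \<le> p (y - s *\<^sub>R w - x) + \<sigma> * p w"
    using s seminorm_nonneg[OF sn[OF p]] by (simp add: mult_right_mono)
  finally show "p (y - x) < d1 + d2" using v[OF p] w[OF p] by linarith
qed

lemma lc_nbhd_ray_chord:
  assumes sn: "\<And>p. p \<in> F \<Longrightarrow> seminorm p" and v: "\<And>p. p \<in> F \<Longrightarrow> p (y - s *\<^sub>R w - x) < d"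
    and s: "0 < \<sigma>" "\<sigma> \<le> s"
  shows "x + (\<sigma> / s) *\<^sub>R (y - x) \<in> lc_nbhd F d (x + \<sigma> *\<^sub>R w)"
  unfolding lc_nbhd_def
proof (intro CollectI ballI)
  fix p assume p: "p \<in> F"
  have "x + (\<sigma> / s) *\<^sub>R (y - x) - (x + \<sigma> *\<^sub>R w) = (\<sigma> / s) *\<^sub>R (y - s *\<^sub>R w - x)"
    using s by (simp add: algebra_simps)
  then have "p (x + (\<sigma> / s) *\<^sub>R (y - x) - (x + \<sigma> *\<^sub>R w)) = (\<sigma> / s) * p (y - s *\<^sub>R w - x)"
    using seminorm_scaleR[OF sn[OF p]] s by simp
  also have "\<dots> \<le> p (y - s *\<^sub>R w - x)"
    using mult_left_le_one_le[OF seminorm_nonneg[OF sn[OF p]], of "\<sigma> / s"] s by simp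
  finally show "p (x + (\<sigma> / s) *\<^sub>R (y - x) - (x + \<sigma> *\<^sub>R w)) < d" using v[OF p] by linarith
qed

text \<open>A point of the swept epigraph close to \<open>(x, g x - \<epsilon>)\<close> either comes from a short step
  \<open>s \<le> \<sigma>\<close>, so that \<open>y\<close> is near \<open>x\<close> where \<open>g > g x - \<epsilon>/2\<close>, or the chord from \<open>x\<close> to \<open>y\<close> passes
  near \<open>x + \<sigma> w\<close>, where \<open>g\<close> still exceeds the ray.\<close>

lemma epigraph_ray_far:
  assumes g: "convex_fun g" and gx: "g x = ereal gx" and \<eta>: "0 < \<eta>"
    and sn: "\<And>p. p \<in> F \<Longrightarrow> seminorm p" and F: "finite F" "F1 \<subseteq> F" "F2 \<subseteq> F"
    and \<sigma>: "0 < \<sigma>" "\<sigma> * q < \<epsilon> / 4" "\<And>p. p \<in> F1 \<Longrightarrow> \<sigma> * p w < e1 / 2"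
    and near: "\<And>z. z \<in> lc_nbhd F1 e1 x \<Longrightarrow> ereal (gx - \<epsilon> / 2) < g z"
    and ahead: "\<And>z. z \<in> lc_nbhd F2 e2 (x + \<sigma> *\<^sub>R w) \<Longrightarrow> ereal (gx + \<sigma> * (q + \<eta> / 2)) < g z"
    and \<delta>: "\<delta> \<le> e1 / 2" "\<delta> \<le> e2" "\<delta> \<le> \<epsilon> / 4"
    and y: "g y \<le> ereal m" "0 \<le> s"
  shows "\<delta> \<le> (\<Sum>p\<in>F. p (y - s *\<^sub>R w - x)) + \<bar>m - s * q - (gx - \<epsilon>)\<bar>"
proof (rule ccontr)
  have S: "0 \<le> (\<Sum>p\<in>F. p (y - s *\<^sub>R w - x))" using seminorm_nonneg[OF seminorm_sum[OF sn]] .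
  assume "\<not> ?thesis"
  then have close: "(\<Sum>p\<in>F. p (y - s *\<^sub>R w - x)) + \<bar>m - s * q - (gx - \<epsilon>)\<bar> < \<delta>" by simp
  then have v: "p (y - s *\<^sub>R w - x) < \<delta>" if "p \<in> F" for p
    using seminorm_le_sum[OF sn F(1) that, of "y - s *\<^sub>R w - x"] S by linarith
  have m: "m < gx - \<epsilon> + \<delta> + s * q" and "0 < \<delta>"
    using close S abs_ge_self[of "m - s * q - (gx - \<epsilon>)"] by linarith+
  show False
  proof (cases "s \<le> \<sigma>")
    case True
    have v1: "p (y - s *\<^sub>R w - x) < e1 / 2" if "p \<in> F1" for p
      using less_le_trans[OF v[OF subsetD[OF F(2) that]] \<delta>(1)] .
    have sn1: "seminorm p" if "p \<in> F1" for p using that F(2) sn by blast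
    have "y \<in> lc_nbhd F1 (e1 / 2 + e1 / 2) x"
      using sn1 v1 \<sigma>(3) y(2) True by (rule lc_nbhd_ray_start)
    then have "gx - \<epsilon> / 2 < m" using less_le_trans[OF near y(1)] by simp
    moreover have "s * q < \<epsilon> / 4"
      using mult_right_mono[OF \<open>s \<le> \<sigma>\<close>, of q] mult_nonneg_nonpos[OF y(2), of q] \<sigma>(2)
        \<open>0 < \<delta>\<close> \<delta>(3) by (cases "0 \<le> q") auto
    ultimately show False using m \<delta>(3) by linarith
  next
    case False
    define u where "u = \<sigma> / s"
    have u: "0 < u" "u \<le> 1" "u * s = \<sigma>" using False \<sigma>(1) unfolding u_def by auto
    have v2: "p (y - s *\<^sub>R w - x) < e2" if "p \<in> F2" for p
      using less_le_trans[OF v[OF subsetD[OF F(3) that]] \<delta>(2)] .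
    have sn2: "seminorm p" if "p \<in> F2" for p using that F(3) sn by blast
    have "\<sigma> \<le> s" using False by simp
    with sn2 v2 \<sigma>(1) have "x + u *\<^sub>R (y - x) \<in> lc_nbhd F2 e2 (x + \<sigma> *\<^sub>R w)"
      unfolding u_def by (rule lc_nbhd_ray_chord)
    then have "ereal (gx + \<sigma> * (q + \<eta> / 2)) < g (x + u *\<^sub>R (y - x))" by (rule ahead)
    also have "\<dots> \<le> ereal (gx + u * (m - gx))"
      using convex_fun_segment[OF g _ y(1), of x gx u] gx u by simp
    finally have "\<sigma> * q + \<sigma> * (\<eta> / 2) < u * (m - gx)" by (simp add: distrib_left)
    moreover have "u * (m - gx) < u * (\<delta> - \<epsilon>) + \<sigma> * q"
      using mult_strict_left_mono[OF m u(1)] u(3) by (simp add: algebra_simps)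
    moreover have "u * (\<delta> - \<epsilon>) < 0" using u(1) \<open>0 < \<delta>\<close> \<delta>(3) by (simp add: mult_pos_neg)
    moreover have "0 < \<sigma> * (\<eta> / 2)" using \<sigma>(1) \<eta> by simp
    ultimately show False by linarith
  qed
qed

lemma eps_subgradient_of_lsc_nbhds:
  assumes lcs: "lcs P" and g: "proper_fun g" "convex_fun g"
    and gx: "g x = ereal gx" and \<epsilon>: "0 < \<epsilon>" and \<eta>: "0 < \<eta>"
    and F1: "finite F1" "F1 \<subseteq> P" "0 < e1" and F2: "finite F2" "F2 \<subseteq> P" "0 < e2"
    and \<sigma>: "0 < \<sigma>" "\<sigma> * q < \<epsilon> / 4" "\<And>p. p \<in> F1 \<Longrightarrow> \<sigma> * p w < e1 / 2"
    and near: "\<And>z. z \<in> lc_nbhd F1 e1 x \<Longrightarrow> ereal (gx - \<epsilon> / 2) < g z"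
    and ahead: "\<And>z. z \<in> lc_nbhd F2 e2 (x + \<sigma> *\<^sub>R w) \<Longrightarrow> ereal (gx + \<sigma> * (q + \<eta> / 2)) < g z"
  shows "\<exists>a\<in>eps_subdiff P \<epsilon> g x. q \<le> a w"
proof -
  define F where "F = F1 \<union> F2"
  have F: "finite F" "F \<subseteq> P" and sn: "\<And>p. p \<in> F \<Longrightarrow> seminorm p"
    using F1 F2 lcs_seminorm[OF lcs] unfolding F_def by auto
  define \<delta> where "\<delta> = min (min (e1 / 2) e2) (\<epsilon> / 4)"
  have \<delta>: "0 < \<delta>" using F1(3) F2(3) \<epsilon> unfolding \<delta>_def by simp
  define Q where "Q z = (\<Sum>p\<in>F. p (fst z)) + \<bar>snd z\<bar>" for z :: "'a \<times> real"
  have Q: "seminorm Q"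
    unfolding Q_def by (intro seminorm_pair seminorm_sum sn seminorm_abs)
  define E where "E = {(y - s *\<^sub>R w, m - s * q) | y m s. g y \<le> ereal m \<and> 0 \<le> s}"
  have "\<delta> \<le> Q (c - (x, gx - \<epsilon>))" if cE: "c \<in> E" for c
  proof -
    obtain y m s where c: "c = (y - s *\<^sub>R w, m - s * q)" "g y \<le> ereal m" "0 \<le> s"
      using cE unfolding E_def by blast
    have "\<delta> \<le> (\<Sum>p\<in>F. p (y - s *\<^sub>R w - x)) + \<bar>m - s * q - (gx - \<epsilon>)\<bar>"
      by (rule epigraph_ray_far[OF g(2) gx \<eta> sn F(1) _ _ \<sigma> near ahead _ _ _ c(2,3)])
        (auto simp: F_def \<delta>_def)
    then show ?thesis unfolding c(1) Q_def by simp
  qed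
  then obtain L k \<theta> where L: "linear L" "\<And>z. \<bar>L z\<bar> \<le> k * Q z" "0 < \<theta>"
    "\<And>c. c \<in> E \<Longrightarrow> L c + \<theta> \<le> L (x, gx - \<epsilon>)"
    using seminorm_convex_separation[OF Q convex_epigraph_ray[OF g(2)] \<delta>] unfolding E_def by blast
  show ?thesis
    using eps_subgradient_of_separation[OF lcs g(1) gx \<epsilon> F L(1) _ L(3), of k w q] L(2,4)
    unfolding Q_def E_def by blast
qed

theorem eps_subgradient_with_slope:
  assumes lcs: "lcs P" and g: "proper_fun g" "convex_fun g" "lc_lsc P g"
    and gx: "g x = ereal gx" and \<epsilon>: "0 < \<epsilon>" and \<eta>: "0 < \<eta>"
    and ray: "\<And>s. 0 < s \<Longrightarrow> ereal (gx + r * s) \<le> g (x + s *\<^sub>R w)"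
  shows "\<exists>a\<in>eps_subdiff P \<epsilon> g x. r - \<eta> \<le> a w"
proof -
  obtain F1 e1 where F1: "finite F1" "F1 \<subseteq> P" "0 < e1"
    and near: "\<And>z. z \<in> lc_nbhd F1 e1 x \<Longrightarrow> ereal (gx - \<epsilon> / 2) < g z"
    using lc_lsc_nbhd[OF g(3), of "gx - \<epsilon> / 2" x] gx \<epsilon> by auto
  have "\<forall>\<^sub>F \<sigma> in at_right 0. \<sigma> * (\<Sum>p\<in>F1. p w) < e1 / 2 \<and> \<sigma> * (r - \<eta>) < \<epsilon> / 4"
    using F1(3) \<epsilon> by (intro eventually_conj eventually_mult_less_at_right) auto
  then obtain \<sigma> where \<sigma>: "0 < \<sigma>" "\<sigma> * (\<Sum>p\<in>F1. p w) < e1 / 2" "\<sigma> * (r - \<eta>) < \<epsilon> / 4"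
    using eventually_at_right_zero_exists by blast
  have sn1: "\<And>p. p \<in> F1 \<Longrightarrow> seminorm p" using F1(2) lcs_seminorm[OF lcs] by blast
  have \<sigma>_F1: "\<sigma> * p w < e1 / 2" if "p \<in> F1" for p
    using mult_left_mono[OF seminorm_le_sum[OF sn1 F1(1) that, of w], of \<sigma>] \<sigma>(1,2) by linarith
  have "ereal (gx + \<sigma> * ((r - \<eta>) + \<eta> / 2)) < g (x + \<sigma> *\<^sub>R w)"
    using less_le_trans[OF _ ray[OF \<sigma>(1)], of "ereal (gx + \<sigma> * ((r - \<eta>) + \<eta> / 2))"] \<sigma>(1) \<eta>
    by (simp add: algebra_simps)
  then obtain F2 e2 where "finite F2" "F2 \<subseteq> P" "0 < e2"
    and "\<And>z. z \<in> lc_nbhd F2 e2 (x + \<sigma> *\<^sub>R w) \<Longrightarrow> ereal (gx + \<sigma> * ((r - \<eta>) + \<eta> / 2)) < g z"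
    using lc_lsc_nbhd[OF g(3)] by blast
  then show ?thesis
    using eps_subgradient_of_lsc_nbhds[OF lcs g(1,2) gx \<epsilon> \<eta> F1] \<sigma>(1,3) \<sigma>_F1 near by blast
qed

section \<open>Weak* separation\<close>

text \<open>Functionals are separated inside the vector space of all functions \<open>X \<Rightarrow> \<real>\<close>.\<close>

instantiation "fun" :: (type, real_vector) real_vector
begin

definition scaleR_fun :: "real \<Rightarrow> ('a \<Rightarrow> 'b) \<Rightarrow> 'a \<Rightarrow> 'b" where
  "scaleR_fun c f = (\<lambda>x. c *\<^sub>R f x)"

instance
  by standard (simp_all add: scaleR_fun_def fun_eq_iff scaleR_add_right scaleR_add_left)

end

lemma scaleR_fun_apply [simp]: "(c *\<^sub>R f) x = c *\<^sub>R f x"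
  by (simp add: scaleR_fun_def)

lemma sum_fun_apply: "(sum f A) x = (\<Sum>a\<in>A. f a x)"
  by (induct A rule: infinite_finite_induct) auto

lemma convex_fconvex:
  assumes "fconvex C" shows "convex C"
proof (rule convexI)
  fix a b :: "'a \<Rightarrow> real" and u v :: real
  assume "a \<in> C" "b \<in> C" "0 \<le> u" "0 \<le> v" "u + v = 1"
  moreover have "u *\<^sub>R a + v *\<^sub>R b = (\<lambda>z. u * a z + (1 - u) * b z)"
    using \<open>u + v = 1\<close> by (auto simp: fun_eq_iff)
  ultimately show "u *\<^sub>R a + v *\<^sub>R b \<in> C" using assms unfolding fconvex_def by auto
qed

lemma finite_evaluation_representation:
  fixes L :: "('a::real_vector \<Rightarrow> real) \<Rightarrow> real"
  assumes L: "linear L" and F: "finite F" and bound: "\<And>\<psi>. \<bar>L \<psi>\<bar> \<le> k * (\<Sum>z\<in>F. \<bar>\<psi> z\<bar>)"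
  obtains w where "\<And>\<psi>. linear \<psi> \<Longrightarrow> L \<psi> = \<psi> w"
proof
  define unit_at where "unit_at z = (\<lambda>u. if u = z then 1 else 0 :: real)" for z :: 'a
  fix \<psi> :: "'a \<Rightarrow> real" assume \<psi>: "linear \<psi>"
  define \<psi>' where "\<psi>' = (\<Sum>z\<in>F. \<psi> z *\<^sub>R unit_at z)"
  have "(\<psi> - \<psi>') u = 0" if "u \<in> F" for u
    using that F unfolding \<psi>'_def unit_at_def by (simp add: sum_fun_apply if_distrib cong: if_cong)
  then have "L (\<psi> - \<psi>') = 0" using bound[of "\<psi> - \<psi>'"] by simp
  then have "L \<psi> = L \<psi>'" using linear_diff[OF L] by simp
  also have "\<dots> = (\<Sum>z\<in>F. \<psi> z * L (unit_at z))"
    unfolding \<psi>'_def using linear_sum[OF L, of "\<lambda>z. \<psi> z *\<^sub>R unit_at z" F] linear_scale[OF L] by simp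
  also have "\<dots> = \<psi> (\<Sum>z\<in>F. L (unit_at z) *\<^sub>R z)"
    using linear_sum[OF \<psi>, of "\<lambda>z. L (unit_at z) *\<^sub>R z" F] linear_scale[OF \<psi>]
    by (simp add: mult.commute)
  finally show "L \<psi> = \<psi> (\<Sum>z\<in>F. L (unit_at z) *\<^sub>R z)" .
qed

theorem wstar_closed_convex_separation:
  fixes C :: "('a::real_vector \<Rightarrow> real) set"
  assumes \<phi>: "\<phi> \<in> lc_dual P" and C: "fconvex C" "wstar_closed P C" and out: "\<phi> \<notin> C"
  obtains w \<theta> where "0 < \<theta>" "\<And>\<psi>. \<psi> \<in> C \<Longrightarrow> \<psi> w + \<theta> \<le> \<phi> w"
proof -
  obtain F e where F: "finite F" "0 < e" and far: "\<And>\<psi>. \<psi> \<in> C \<Longrightarrow> \<exists>z\<in>F. e \<le> \<bar>\<phi> z - \<psi> z\<bar>"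
    using C(2) \<phi> out unfolding wstar_closed_def by (force simp: not_less)
  define Q where "Q \<psi> = (\<Sum>z\<in>F. \<bar>\<psi> z\<bar>)" for \<psi> :: "'a \<Rightarrow> real"
  have Q: "seminorm Q"
    unfolding Q_def seminorm_def
    by (simp add: sum.distrib[symmetric] sum_mono abs_triangle_ineq sum_distrib_left abs_mult)
  have "e \<le> Q (\<psi> - \<phi>)" if \<psi>: "\<psi> \<in> C" for \<psi>
  proof -
    obtain z where z: "z \<in> F" "e \<le> \<bar>\<phi> z - \<psi> z\<bar>" using far[OF \<psi>] by blast
    have "\<bar>\<phi> z - \<psi> z\<bar> \<le> Q (\<psi> - \<phi>)"
      unfolding Q_def using member_le_sum[of z F "\<lambda>z. \<bar>(\<psi> - \<phi>) z\<bar>"] z(1) F(1) by simp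
    then show ?thesis using z by simp
  qed
  then obtain L k \<theta> where L: "linear L" "\<And>\<psi>. \<bar>L \<psi>\<bar> \<le> k * Q \<psi>" "0 < \<theta>"
    "\<And>\<psi>. \<psi> \<in> C \<Longrightarrow> L \<psi> + \<theta> \<le> L \<phi>"
    using seminorm_convex_separation[OF Q convex_fconvex[OF C(1)] F(2)] by blast
  obtain w where w: "\<And>\<psi>. linear \<psi> \<Longrightarrow> L \<psi> = \<psi> w"
    using finite_evaluation_representation[OF L(1) F(1) L(2)[unfolded Q_def]] by blast
  have "\<psi> w + \<theta> \<le> \<phi> w" if "\<psi> \<in> C" for \<psi>
    using L(4)[OF that] w lc_dual_linear \<phi> that C(2) unfolding wstar_closed_def by (metis subsetD)
  then show thesis using that L(3) by blast
qed

section \<open>Subdifferential of a supremum\<close>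

lemma eps_subdiff_scale:
  assumes lcs: "lcs P" and \<rho>: "0 < \<rho>" and a: "a \<in> eps_subdiff P (e / \<rho>) g x"
  shows "(\<lambda>z. \<rho> * a z) \<in> eps_subdiff P e (\<lambda>y. ereal \<rho> * g y) x"
proof -
  obtain g0 where g0: "g x = ereal g0" using a unfolding eps_subdiff_def by (cases "g x") auto
  have a: "a \<in> lc_dual P" "\<And>y. ereal g0 + ereal (a (y - x)) - ereal (e / \<rho>) \<le> g y"
    using a g0 by (simp_all add: eps_subdiff_finite_iff)
  have "ereal (\<rho> * g0) + ereal (\<rho> * a (y - x)) - ereal e \<le> ereal \<rho> * g y" for y
  proof (cases "g y")
    case (real m)
    then have "g0 + a (y - x) - e / \<rho> \<le> m" using a(2)[of y] by simp
    then have "\<rho> * (g0 + a (y - x) - e / \<rho>) \<le> \<rho> * m" using \<rho> by (intro mult_left_mono) auto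
    then show ?thesis using real \<rho> by (simp add: algebra_simps)
  qed (use a(2)[of y] \<rho> in auto)
  then show ?thesis using g0 lc_dual_scale[OF lcs a(1)] by (simp add: eps_subdiff_finite_iff)
qed

lemma convex_fun_ray:
  assumes g: "convex_fun g" and "g x \<le> ereal a" "g (x + s1 *\<^sub>R w) \<le> ereal (a + c * s1)"
    and s: "0 < s" "s \<le> s1"
  shows "g (x + s *\<^sub>R w) \<le> ereal (a + c * s)"
  using convex_fun_segment[OF g assms(2,3), of "s / s1"] s by (simp add: field_simps)

lemma ray_descent_below:
  assumes g: "convex_fun g" and gx: "g x = ereal g0" "g0 < fx"
    and s0: "0 < s0" "g (x + s0 *\<^sub>R w) = ereal gs"
  shows "\<exists>s>0. g (x + s *\<^sub>R w) < ereal (fx + c * s)"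
proof -
  have "\<forall>\<^sub>F u in at_right 0. u * (gs - g0 - c * s0) < fx - g0 \<and> u * 1 < 1"
    using gx(2) by (intro eventually_conj eventually_mult_less_at_right) auto
  then obtain u where u: "0 < u" "u * (gs - g0 - c * s0) < fx - g0" "u * 1 < 1"
    using eventually_at_right_zero_exists by blast
  have "g (x + u *\<^sub>R ((x + s0 *\<^sub>R w) - x)) \<le> ereal (g0 + u * (gs - g0))"
    using convex_fun_segment[OF g _ _, of x g0 "x + s0 *\<^sub>R w" gs u] gx s0 u by simp
  also have "\<dots> < ereal (fx + c * (u * s0))" using u(2) by (simp add: algebra_simps)
  finally show ?thesis using u(1) s0(1) by (intro exI[of _ "u * s0"]) simp
qed

lemma ray_finite_if_bounded_slopes:
  assumes lcs: "lcs P" and g: "proper_fun g" "convex_fun g" "lc_lsc P g"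
    and gx: "g x = ereal g0" and e: "0 < e" and \<rho>: "0 < \<rho>"
    and bounded: "\<And>b. b \<in> eps_subdiff P e (\<lambda>y. ereal \<rho> * g y) x \<Longrightarrow> e * b w \<le> d"
  shows "\<exists>s>0. g (x + s *\<^sub>R w) \<noteq> \<infinity>"
proof (rule ccontr)
  assume "\<not> ?thesis"
  then have "ereal (g0 + (\<bar>d\<bar> / (e * \<rho>) + 2) * s) \<le> g (x + s *\<^sub>R w)" if "0 < s" for s
    using that by auto
  then obtain a where a: "a \<in> eps_subdiff P (e / \<rho>) g x" "\<bar>d\<bar> / (e * \<rho>) + 1 \<le> a w"
    using eps_subgradient_with_slope[OF lcs g gx, of "e / \<rho>" 1] e \<rho> by force
  have "e * (\<rho> * a w) \<le> d" using bounded[OF eps_subdiff_scale[OF lcs \<rho> a(1)]] .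
  moreover have "\<bar>d\<bar> + e * \<rho> \<le> e * \<rho> * a w"
    using mult_left_mono[OF a(2), of "e * \<rho>"] e \<rho> by (simp add: distrib_left)
  ultimately show False using e \<rho> by (simp add: mult.assoc) (smt (verit) mult_pos_pos)
qed

lemma ray_descent:
  assumes lcs: "lcs P" and g: "proper_fun g" "convex_fun g" "lc_lsc P g"
    and gx: "g x \<le> ereal fx" and e: "0 < e" and \<rho>: "0 < \<rho>" and \<theta>: "0 < \<theta>"
    and active: "\<And>a. g x = ereal fx \<Longrightarrow> a \<in> eps_subdiff P e g x \<Longrightarrow> a w + \<theta> \<le> c"
    and inactive: "\<And>b. g x \<noteq> ereal fx \<Longrightarrow> b \<in> eps_subdiff P e (\<lambda>y. ereal \<rho> * g y) x \<Longrightarrow> e * b w \<le> d"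
  shows "\<exists>s>0. g (x + s *\<^sub>R w) < ereal (fx + c * s)"
proof (cases "g x = ereal fx")
  case True
  show ?thesis
  proof (rule ccontr)
    assume "\<not> ?thesis"
    then have "\<not> g (x + s *\<^sub>R w) < ereal (fx + c * s)" if "0 < s" for s
      using that by blast
    then have "ereal (fx + c * s) \<le> g (x + s *\<^sub>R w)" if "0 < s" for s
      using that by (simp add: not_less)
    then obtain a where "a \<in> eps_subdiff P e g x" "c - \<theta> / 2 \<le> a w"
      using eps_subgradient_with_slope[OF lcs g True e, of "\<theta> / 2" c w] \<theta> by (auto simp: mult.commute)
    then show False using active[OF True] \<theta> by fastforce
  qed
next
  case False
  have "g x \<noteq> \<infinity>" using gx by auto
  then obtain g0 where "g x = ereal g0" by (rule proper_fun_finite[OF g(1)])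
  with False gx have g0: "g x = ereal g0" "g0 < fx" by auto
  have "e * b w \<le> d" if "b \<in> eps_subdiff P e (\<lambda>y. ereal \<rho> * g y) x" for b
    using inactive[OF False that] .
  then obtain s0 where s0: "0 < s0" "g (x + s0 *\<^sub>R w) \<noteq> \<infinity>"
    using ray_finite_if_bounded_slopes[OF lcs g g0(1) e \<rho>] by blast
  then obtain gs where "g (x + s0 *\<^sub>R w) = ereal gs"
    using proper_fun_finite[OF g(1)] by blast
  then show ?thesis using ray_descent_below[OF g(2) g0 s0(1)] by blast
qed

text \<open>Convexity along the ray lets the smallest of finitely many step lengths serve for all
  indices.\<close>

lemma uniform_ray_descent:
  fixes ft :: "'i::topological_space \<Rightarrow> 'a::real_vector \<Rightarrow> ereal"
  assumes T: "compact (UNIV :: 'i set)" and usc: "\<And>z c. open {t. ft t z < c}"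
    and cvx: "\<And>t. convex_fun (ft t)" and below: "\<And>t. ft t x \<le> ereal fx"
    and descent: "\<And>t. \<exists>s>0. ft t (x + s *\<^sub>R w) < ereal (fx + c * s)"
  obtains s where "0 < s" "\<And>t. ft t (x + s *\<^sub>R w) \<le> ereal (fx + c * s)"
proof -
  from descent have "\<forall>t. \<exists>s. 0 < s \<and> ft t (x + s *\<^sub>R w) < ereal (fx + c * s)" by blast
  then obtain S where S: "\<And>t. 0 < S t" "\<And>t. ft t (x + S t *\<^sub>R w) < ereal (fx + c * S t)"
    by (metis choice)
  define U where "U t = {t'. ft t' (x + S t *\<^sub>R w) < ereal (fx + c * S t)}" for t
  have U: "open (U t)" for t unfolding U_def by (rule usc)
  have "UNIV \<subseteq> (\<Union>t\<in>UNIV. U t)" using S(2) unfolding U_def by blast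
  then obtain I where I: "finite I" "UNIV \<subseteq> (\<Union>t\<in>I. U t)"
    by (rule compactE_image[OF T U]) blast
  then have "I \<noteq> {}" by blast
  define s where "s = Min (S ` I)"
  have s: "0 < s" "\<And>t. t \<in> I \<Longrightarrow> s \<le> S t"
    using S(1) I(1) \<open>I \<noteq> {}\<close> unfolding s_def by auto
  have "ft t' (x + s *\<^sub>R w) \<le> ereal (fx + c * s)" for t'
  proof -
    obtain t where t: "t \<in> I" "t' \<in> U t" using I(2) by blast
    then have "ft t' (x + S t *\<^sub>R w) \<le> ereal (fx + c * S t)" unfolding U_def by simp
    then show ?thesis by (rule convex_fun_ray[OF cvx below _ s(1) s(2)[OF t(1)]])
  qed
  then show thesis using that s(1) by blast
qed

definition subdiff_approx ::
    "('a::real_vector \<Rightarrow> real) set \<Rightarrow> ('i \<Rightarrow> 'a \<Rightarrow> ereal) \<Rightarrow> ('i \<Rightarrow> real) \<Rightarrow> 'a \<Rightarrow> real \<Rightarrow> ('a \<Rightarrow> real) set"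
  where
  "subdiff_approx P ft \<rho> x e =
     (\<Union>t\<in>{t. ft t x = (SUP s. ft s x)}. eps_subdiff P e (ft t) x) \<union>
     (\<Union>t\<in>{t. ft t x \<noteq> (SUP s. ft s x)}. fscale e (eps_subdiff P e (\<lambda>y. ereal (\<rho> t) * ft t y) x))"

theorem subdiff_Sup_subset:
  fixes ft :: "'i::topological_space \<Rightarrow> 'a::real_vector \<Rightarrow> ereal"
  assumes lcs: "lcs P" and ft: "\<And>t. proper_fun (ft t)" "\<And>t. convex_fun (ft t)" "\<And>t. lc_lsc P (ft t)"
    and T: "compact (UNIV :: 'i set)" and usc: "\<And>z c. open {t. ft t z < c}"
    and \<rho>: "\<And>t. 0 < \<rho> t" and fx: "(SUP t. ft t x) = ereal fx" and e: "0 < e"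
  shows "eps_subdiff P 0 (\<lambda>y. SUP t. ft t y) x \<subseteq> wstar_clco P (subdiff_approx P ft \<rho> x e)"
proof
  fix \<phi> assume "\<phi> \<in> eps_subdiff P 0 (\<lambda>y. SUP t. ft t y) x"
  then have \<phi>: "\<phi> \<in> lc_dual P" and sub: "\<And>y. ereal fx + ereal (\<phi> (y - x)) \<le> (SUP t. ft t y)"
    using fx by (simp_all add: eps_subdiff_finite_iff)
  show "\<phi> \<in> wstar_clco P (subdiff_approx P ft \<rho> x e)"
    unfolding wstar_clco_def
  proof (rule InterI, rule ccontr)
    fix C assume "C \<in> {C. fconvex C \<and> wstar_closed P C \<and> subdiff_approx P ft \<rho> x e \<subseteq> C}"
      and out: "\<phi> \<notin> C"
    then have C: "fconvex C" "wstar_closed P C" "subdiff_approx P ft \<rho> x e \<subseteq> C" by auto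
    obtain w \<theta> where \<theta>: "0 < \<theta>" and sepC: "\<And>\<psi>. \<psi> \<in> C \<Longrightarrow> \<psi> w + \<theta> \<le> \<phi> w"
      using wstar_closed_convex_separation[OF \<phi> C(1,2) out] by blast
    have sep: "\<psi> w + \<theta> \<le> \<phi> w" if "\<psi> \<in> subdiff_approx P ft \<rho> x e" for \<psi>
      using sepC C(3) that by blast
    have below: "ft t x \<le> ereal fx" for t
      using SUP_upper[of t UNIV "\<lambda>t. ft t x"] fx by simp
    have "\<exists>s>0. ft t (x + s *\<^sub>R w) < ereal (fx + (\<phi> w - \<theta> / 2) * s)" for t
    proof (rule ray_descent[OF lcs ft(1-3) below e \<rho> half_gt_zero[OF \<theta>]])
      show "a w + \<theta> / 2 \<le> \<phi> w - \<theta> / 2" if "ft t x = ereal fx" "a \<in> eps_subdiff P e (ft t) x" for a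
      proof -
        have "a \<in> subdiff_approx P ft \<rho> x e" using that fx unfolding subdiff_approx_def by auto
        then show ?thesis using sep by fastforce
      qed
      show "e * b w \<le> \<phi> w - \<theta>"
        if "ft t x \<noteq> ereal fx" "b \<in> eps_subdiff P e (\<lambda>y. ereal (\<rho> t) * ft t y) x" for b
      proof -
        have "(\<lambda>z. e * b z) \<in> subdiff_approx P ft \<rho> x e"
          using that fx unfolding subdiff_approx_def fscale_def by auto
        then show ?thesis using sep by fastforce
      qed
    qed
    then obtain s where s: "0 < s" "\<And>t. ft t (x + s *\<^sub>R w) \<le> ereal (fx + (\<phi> w - \<theta> / 2) * s)"
      using uniform_ray_descent[OF T usc ft(2) below] by blast
    have "ereal (fx + s * \<phi> w) \<le> (SUP t. ft t (x + s *\<^sub>R w))"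
      using sub[of "x + s *\<^sub>R w"] linear_scale[OF lc_dual_linear[OF \<phi>]] by simp
    also have "\<dots> \<le> ereal (fx + (\<phi> w - \<theta> / 2) * s)" by (rule SUP_least) (rule s(2))
    finally show False using mult_pos_pos[OF \<theta> s(1)] by (simp add: algebra_simps)
  qed
qed

lemma wstar_clco_halfspace:
  assumes lcs: "lcs P" and A: "A \<subseteq> {\<psi> \<in> lc_dual P. \<psi> v \<le> b}"
  shows "wstar_clco P A \<subseteq> {\<psi> \<in> lc_dual P. \<psi> v \<le> b}"
proof -
  have "fconvex {\<psi> \<in> lc_dual P. \<psi> v \<le> b}"
    unfolding fconvex_def
  proof (intro ballI allI impI)
    fix \<phi> \<psi> :: "'a \<Rightarrow> real" and u :: real
    assume \<phi>: "\<phi> \<in> {\<psi> \<in> lc_dual P. \<psi> v \<le> b}" and \<psi>: "\<psi> \<in> {\<psi> \<in> lc_dual P. \<psi> v \<le> b}"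
      and u: "0 \<le> u \<and> u \<le> 1"
    have "u * \<phi> v + (1 - u) * \<psi> v \<le> b"
      using \<phi> \<psi> u by (intro convex_bound_le) auto
    moreover have "(\<lambda>z. u * \<phi> z + (1 - u) * \<psi> z) \<in> lc_dual P"
      using \<phi> \<psi> by (intro lc_dual_add[OF lcs] lc_dual_scale[OF lcs]) auto
    ultimately show "(\<lambda>z. u * \<phi> z + (1 - u) * \<psi> z) \<in> {\<psi> \<in> lc_dual P. \<psi> v \<le> b}" by simp
  qed
  moreover have "wstar_closed P {\<psi> \<in> lc_dual P. \<psi> v \<le> b}"
    unfolding wstar_closed_def
  proof (intro conjI ballI impI)
    fix \<phi> assume \<phi>: "\<phi> \<in> lc_dual P"
      and approx: "\<forall>(F::'a set) e. finite F \<and> 0 < e \<longrightarrow> (\<exists>\<psi>\<in>{\<psi> \<in> lc_dual P. \<psi> v \<le> b}. \<forall>z\<in>F. \<bar>\<phi> z - \<psi> z\<bar> < e)"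
    have "\<phi> v \<le> b"
    proof (rule field_le_epsilon)
      fix \<eta> :: real assume "0 < \<eta>"
      then obtain \<psi> where "\<psi> v \<le> b" "\<bar>\<phi> v - \<psi> v\<bar> < \<eta>" using approx[rule_format, of "{v}" \<eta>] by auto
      then show "\<phi> v \<le> b + \<eta>" by simp
    qed
    then show "\<phi> \<in> {\<psi> \<in> lc_dual P. \<psi> v \<le> b}" using \<phi> by simp
  qed auto
  ultimately show ?thesis using A unfolding wstar_clco_def by blast
qed

lemma eps_subgradient_le:
  assumes "a \<in> eps_subdiff P e g x" "g x = ereal gx" "g y \<le> ereal gy"
  shows "a (y - x) \<le> gy - gx + e"
proof -
  have "ereal (gx + a (y - x) - e) \<le> g y" using assms(1,2) by (simp add: eps_subdiff_finite_iff)
  then have "ereal (gx + a (y - x) - e) \<le> ereal gy" using assms(3) by (rule order_trans)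
  then show ?thesis by simp
qed

lemma scaled_eps_subgradient_le:
  assumes b: "b \<in> eps_subdiff P e (\<lambda>y. ereal \<rho> * g y) x" and \<rho>: "0 < \<rho>" "\<rho> \<le> 1"
    and g: "g x = ereal g0" "g y = ereal gy" "gy \<le> fy" and m: "m \<le> \<rho> * g0"
  shows "b (y - x) \<le> \<bar>fy\<bar> + \<bar>m\<bar> + e"
proof -
  have "b (y - x) \<le> \<rho> * gy - \<rho> * g0 + e"
    using eps_subgradient_le[OF b] g by simp
  moreover have "\<rho> * gy \<le> \<bar>fy\<bar>"
  proof (cases "0 \<le> gy")
    case True
    then have "\<rho> * gy \<le> gy" using \<rho> by (simp add: mult_left_le_one_le)
    then show ?thesis using g(3) by simp
  next
    case False
    then have "\<rho> * gy \<le> 0" using \<rho> by (simp add: mult_nonneg_nonpos)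
    then show ?thesis by linarith
  qed
  ultimately show ?thesis using m by linarith
qed

lemma subdiff_approx_le:
  assumes lcs: "lcs P" and ft: "\<And>t. proper_fun (ft t)" and \<rho>: "\<And>t. 0 < \<rho> t \<and> \<rho> t \<le> 1"
    and fx: "(SUP t. ft t x) = ereal fx" and fy: "(SUP t. ft t y) = ereal fy" and "fx \<le> fy"
    and m: "\<And>t. ereal m \<le> ereal (\<rho> t) * ft t x" and e: "0 < e"
    and a: "a \<in> subdiff_approx P ft \<rho> x e"
  shows "a \<in> lc_dual P \<and> a (y - x) \<le> fy - fx + e + e * (\<bar>fy\<bar> + \<bar>m\<bar> + e)"
proof -
  have le_Sup: "ft t z \<le> (SUP t. ft t z)" for t z by (rule SUP_upper) simp
  have bound: "0 \<le> e * (\<bar>fy\<bar> + \<bar>m\<bar> + e)" using e by simp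
  consider (active) t where "ft t x = ereal fx" "a \<in> eps_subdiff P e (ft t) x"
    | (inactive) t b where "b \<in> eps_subdiff P e (\<lambda>y. ereal (\<rho> t) * ft t y) x" "a = (\<lambda>z. e * b z)"
    using a fx unfolding subdiff_approx_def fscale_def by auto
  then show ?thesis
  proof cases
    case active
    then have "a (y - x) \<le> fy - fx + e"
      using eps_subgradient_le[OF active(2,1)] le_Sup[of t y] fy by simp
    then show ?thesis using active(2) bound unfolding eps_subdiff_def by (auto split: if_splits)
  next
    case inactive
    have "ft t x \<noteq> \<infinity>" "ft t y \<noteq> \<infinity>" and y: "ft t y \<le> ereal fy"
      using le_Sup[of t x] le_Sup[of t y] fx fy by auto
    then obtain g0 gy where g: "ft t x = ereal g0" "ft t y = ereal gy"
      using proper_fun_finite[OF ft] by metis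
    have "b (y - x) \<le> \<bar>fy\<bar> + \<bar>m\<bar> + e"
      using scaled_eps_subgradient_le[OF inactive(1) _ _ g] \<rho>[of t] y m[of t] g by simp
    then have "a (y - x) \<le> e * (\<bar>fy\<bar> + \<bar>m\<bar> + e)"
      using inactive(2) e by (simp add: mult_left_mono)
    moreover have "a \<in> lc_dual P"
      using inactive lc_dual_scale[OF lcs] unfolding eps_subdiff_def by (auto split: if_splits)
    ultimately show ?thesis using \<open>fx \<le> fy\<close> e by simp
  qed
qed

theorem subdiff_Sup_supset:
  assumes lcs: "lcs P" and ft: "\<And>t. proper_fun (ft t)" and \<rho>: "\<And>t. 0 < \<rho> t \<and> \<rho> t \<le> 1"
    and fx: "(SUP t. ft t x) = ereal fx" and m: "\<And>t. ereal m \<le> ereal (\<rho> t) * ft t x"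
    and min: "\<And>y. (SUP t. ft t x) \<le> (SUP t. ft t y)"
  shows "(\<Inter>e\<in>{e. 0 < e}. wstar_clco P (subdiff_approx P ft \<rho> x e)) \<subseteq> eps_subdiff P 0 (\<lambda>y. SUP t. ft t y) x"
proof
  fix \<phi> assume \<phi>: "\<phi> \<in> (\<Inter>e\<in>{e. 0 < e}. wstar_clco P (subdiff_approx P ft \<rho> x e))"
  have approx: "\<phi> \<in> lc_dual P \<and> \<phi> (y - x) \<le> fy - fx + e + e * (\<bar>fy\<bar> + \<bar>m\<bar> + e)"
    if fy: "(SUP t. ft t y) = ereal fy" and e: "0 < e" for y fy e
  proof -
    have "fx \<le> fy" using min[of y] fx fy by simp
    then have "subdiff_approx P ft \<rho> x e \<subseteq> {\<psi> \<in> lc_dual P. \<psi> (y - x) \<le> fy - fx + e + e * (\<bar>fy\<bar> + \<bar>m\<bar> + e)}"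
      using subdiff_approx_le[OF lcs ft \<rho> fx fy _ m e] by blast
    then show ?thesis using wstar_clco_halfspace[OF lcs] \<phi> e by blast
  qed
  have le: "\<phi> (y - x) \<le> fy - fx" if fy: "(SUP t. ft t y) = ereal fy" for y fy
  proof (rule tendsto_le[OF trivial_limit_at_right_real _ tendsto_const])
    show "((\<lambda>e. fy - fx + e + e * (\<bar>fy\<bar> + \<bar>m\<bar> + e)) \<longlongrightarrow> fy - fx) (at_right 0)"
      by (rule tendsto_eq_intros | simp)+
    show "\<forall>\<^sub>F e in at_right 0. \<phi> (y - x) \<le> fy - fx + e + e * (\<bar>fy\<bar> + \<bar>m\<bar> + e)"
      using eventually_at_right_less[of 0] by eventually_elim (use approx[OF fy] in blast)
  qed
  have "(SUP t. ft t y) \<noteq> - \<infinity>" for y using SUP_proper_fun_not_MInf[OF ft] .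
  then have "ereal fx + ereal (\<phi> (y - x)) \<le> (SUP t. ft t y)" for y
    using le[of y] by (cases "SUP t. ft t y") auto
  then show "\<phi> \<in> eps_subdiff P 0 (\<lambda>y. SUP t. ft t y) x"
    using approx[OF fx, of 1] fx by (simp add: eps_subdiff_finite_iff)
qed

theorem theorem2:
  fixes P :: "('a::real_vector \<Rightarrow> real) set"
    and ft :: "'i::t2_space \<Rightarrow> 'a \<Rightarrow> ereal"
    and \<rho> :: "'i \<Rightarrow> real"
    and x :: 'a
  assumes lcs: "lcs P"
    and ft: "\<And>t. proper_fun (ft t) \<and> convex_fun (ft t) \<and> lc_lsc P (ft t)"
    and Tcomp: "compact (UNIV :: 'i set)"
    and usc: "\<And>z c. open {t. ft t z < c}"
    and dom: "(SUP t. ft t x) < \<infinity>"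
    and rho: "\<And>t. 0 < \<rho> t \<and> \<rho> t \<le> 1"
    and infb: "(INF t. ereal (\<rho> t) * ft t x) > -\<infinity>"
  shows "eps_subdiff P 0 (\<lambda>y. SUP t. ft t y) x \<subseteq>
           (\<Inter>e\<in>{e::real. e > 0}. wstar_clco P
              ((\<Union>t\<in>{t. ft t x = (SUP s. ft s x)}. eps_subdiff P e (ft t) x) \<union>
               (\<Union>t\<in>{t. ft t x \<noteq> (SUP s. ft s x)}.
                   fscale e (eps_subdiff P e (\<lambda>y. ereal (\<rho> t) * ft t y) x))))
       \<and> ((\<forall>y. (SUP t. ft t x) \<le> (SUP t. ft t y)) \<longrightarrow>
          eps_subdiff P 0 (\<lambda>y. SUP t. ft t y) x =
           (\<Inter>e\<in>{e::real. e > 0}. wstar_clco P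
              ((\<Union>t\<in>{t. ft t x = (SUP s. ft s x)}. eps_subdiff P e (ft t) x) \<union>
               (\<Union>t\<in>{t. ft t x \<noteq> (SUP s. ft s x)}.
                   fscale e (eps_subdiff P e (\<lambda>y. ereal (\<rho> t) * ft t y) x)))))"
proof -
  have ftp: "\<And>t. proper_fun (ft t)" and ftc: "\<And>t. convex_fun (ft t)" and ftl: "\<And>t. lc_lsc P (ft t)"
    using ft by blast+
  have "(SUP t. ft t x) \<noteq> - \<infinity>" using SUP_proper_fun_not_MInf[OF ftp] .
  then obtain fx where fx: "(SUP t. ft t x) = ereal fx" using dom by (cases "SUP t. ft t x") auto
  obtain m where "ereal m < (INF t. ereal (\<rho> t) * ft t x)" using infb ereal_dense2 by blast
  then have m: "ereal m \<le> ereal (\<rho> t) * ft t x" for t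
    using INF_lower[of t UNIV "\<lambda>t. ereal (\<rho> t) * ft t x"] by simp
  have "eps_subdiff P 0 (\<lambda>y. SUP t. ft t y) x \<subseteq> (\<Inter>e\<in>{e. 0 < e}. wstar_clco P (subdiff_approx P ft \<rho> x e))"
    using subdiff_Sup_subset[OF lcs ftp ftc ftl Tcomp usc _ fx] rho by blast
  moreover have "(\<Inter>e\<in>{e. 0 < e}. wstar_clco P (subdiff_approx P ft \<rho> x e)) \<subseteq> eps_subdiff P 0 (\<lambda>y. SUP t. ft t y) x"
    if "\<forall>y. (SUP t. ft t x) \<le> (SUP t. ft t y)"
    using subdiff_Sup_supset[OF lcs ftp rho fx m] that by blast
  ultimately show ?thesis unfolding subdiff_approx_def by blast
qed

end
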